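(* There is an algorithm and a universal constant $C>0$ such that, given any positive integer $T$, $x \in \{0,1\}^T$ and $p \in [0,1]^T$, the algorithm runs in time polynomial in $T$ and outputs a number $v$ with $|v - \mathsf{CalDist}(x,p)| \le C\sqrt{T}$.
   Context: For $x \in \{0,1\}^T$, let $\mathcal{C}(x) = \{q \in [0,1]^T : \sum_{t=1}^T (x_t - q_t)\mathbf{1}[q_t = \alpha] = 0 \text{ for all } \alpha \in [0,1]\}$. The calibration distance of predictions $p \in [0,1]^T$ with respect to outcomes $x$ is $\mathsf{CalDist}(x,p) = \min_{q \in \mathcal{C}(x)} \|p - q\|_1$. *)

theory Defs
  imports Complex_Main
begin

text \<open>Vectors in [0,1]^T / {0,1}^T are functions nat => real, only the
coordinates 0..T-1 are relevant (0-indexed).\<close>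

definition calib_set :: "nat \<Rightarrow> (nat \<Rightarrow> real) \<Rightarrow> (nat \<Rightarrow> real) set" where
  "calib_set T x = {q. (\<forall>t<T. 0 \<le> q t \<and> q t \<le> 1) \<and>
      (\<forall>\<alpha>::real. 0 \<le> \<alpha> \<and> \<alpha> \<le> 1 \<longrightarrow>
         (\<Sum>t<T. (x t - q t) * (if q t = \<alpha> then 1 else 0)) = 0)}"

definition CalDist :: "nat \<Rightarrow> (nat \<Rightarrow> real) \<Rightarrow> (nat \<Rightarrow> real) \<Rightarrow> real" where
  "CalDist T x p = Inf {(\<Sum>t<T. \<bar>p t - q t\<bar>) | q. q \<in> calib_set T x}"

text \<open>No real constants other than those obtained
from naturals, no floor.\<close>

type_synonym state = "(nat \<Rightarrow> nat) \<times> (nat \<Rightarrow> real)"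

datatype nexp = NConst nat | NLoad nexp | NAdd nexp nexp | NSub nexp nexp

datatype rexp = RLoad nexp | RNat nexp | RAdd rexp rexp | RSub rexp rexp
  | RMul rexp rexp | RDiv rexp rexp

datatype bexp = NLess nexp nexp | RLess rexp rexp | BNot bexp | BAnd bexp bexp

datatype com = Skip
  | NStore nexp nexp
  | RStore nexp rexp
  | Seq com com
  | If bexp com com
  | While bexp com

fun neval :: "nexp \<Rightarrow> state \<Rightarrow> nat" where
  "neval (NConst n) s = n"
| "neval (NLoad a) s = fst s (neval a s)"
| "neval (NAdd a b) s = neval a s + neval b s"
| "neval (NSub a b) s = neval a s - neval b s"

fun reval :: "rexp \<Rightarrow> state \<Rightarrow> real" where
  "reval (RLoad a) s = snd s (neval a s)"
| "reval (RNat a) s = real (neval a s)"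
| "reval (RAdd a b) s = reval a s + reval b s"
| "reval (RSub a b) s = reval a s - reval b s"
| "reval (RMul a b) s = reval a s * reval b s"
| "reval (RDiv a b) s = reval a s / reval b s"

fun beval :: "bexp \<Rightarrow> state \<Rightarrow> bool" where
  "beval (NLess a b) s = (neval a s < neval b s)"
| "beval (RLess a b) s = (reval a s < reval b s)"
| "beval (BNot b) s = (\<not> beval b s)"
| "beval (BAnd a b) s = (beval a s \<and> beval b s)"

text \<open>Big-step semantics: exec c s n s' means c started in s terminates in s'
after n time steps.\<close>

inductive exec :: "com \<Rightarrow> state \<Rightarrow> nat \<Rightarrow> state \<Rightarrow> bool" where
  "exec Skip s 1 s"
| "exec (NStore a e) s 1 ((fst s)(neval a s := neval e s), snd s)"
| "exec (RStore a e) s 1 (fst s, (snd s)(neval a s := reval e s))"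
| "exec c1 s n1 s1 \<Longrightarrow> exec c2 s1 n2 s2 \<Longrightarrow> exec (Seq c1 c2) s (n1 + n2) s2"
| "beval b s \<Longrightarrow> exec c1 s n s' \<Longrightarrow> exec (If b c1 c2) s (Suc n) s'"
| "\<not> beval b s \<Longrightarrow> exec c2 s n s' \<Longrightarrow> exec (If b c1 c2) s (Suc n) s'"
| "\<not> beval b s \<Longrightarrow> exec (While b c) s 1 s"
| "beval b s \<Longrightarrow> exec c s n1 s1 \<Longrightarrow> exec (While b c) s1 n2 s2 \<Longrightarrow>
     exec (While b c) s (Suc (n1 + n2)) s2"

text \<open>Input encoding: nat register 0 holds T; real register 1+t holds x_t and
real register 1+T+t holds p_t (t < T); everything else is 0.
The output is read from real register 0.\<close>

definition init_state :: "nat \<Rightarrow> (nat \<Rightarrow> real) \<Rightarrow> (nat \<Rightarrow> real) \<Rightarrow> state" where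
  "init_state T x p =
     ((\<lambda>i. if i = 0 then T else 0),
      (\<lambda>i. if 1 \<le> i \<and> i \<le> T then x (i - 1)
           else if T + 1 \<le> i \<and> i \<le> 2 * T then p (i - T - 1) else 0))"

end

theory Submission
  imports Defs "HOL-Combinatorics.Permutations"
begin

text \<open>The calibration distance can be computed exactly. Rank the rounds with outcome 0, and separately
  those with outcome 1, by increasing forecast. Within one outcome class, moving the smaller of two
  predictions onto the smaller forecast never increases the L1 cost and does not affect
  calibration, which depends only on how many zeros and ones carry each predicted value. So some
  optimal calibrated prediction is monotone in rank within each class; its level sets are then
  blocks of consecutive ranks in both classes, and on each block it must equal the block's frequency
  of ones. The distance is therefore the cheapest cut of the two ranked sequences into consecutive
  blocks, found by a dynamic program over the \<open>O(T\<^sup>2)\<close> pairs of prefix lengths, with \<open>O(T\<^sup>2)\<close>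
  transitions per pair and \<open>O(T)\<close> work per transition: \<open>O(T\<^sup>5)\<close> steps of a unit-cost real RAM.\<close>

section \<open>Ranks and monotone rearrangements\<close>

locale strict_total_order =
  fixes less :: "'a \<Rightarrow> 'a \<Rightarrow> bool" (infix \<open>\<prec>\<close> 50)
  assumes irrefl: "\<not> s \<prec> s"
    and trans: "s \<prec> t \<Longrightarrow> t \<prec> u \<Longrightarrow> s \<prec> u"
    and total: "s \<noteq> t \<Longrightarrow> s \<prec> t \<or> t \<prec> s"
begin

definition rank_in :: "'a set \<Rightarrow> 'a \<Rightarrow> nat" where
  "rank_in Z t = card {u\<in>Z. u \<prec> t}"

lemma rank_in_less:
  assumes "finite Z" "s \<in> Z" "s \<prec> t"
  shows "rank_in Z s < rank_in Z t"
  unfolding rank_in_def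
proof (rule psubset_card_mono)
  show "finite {u\<in>Z. u \<prec> t}" using assms(1) by simp
  show "{u\<in>Z. u \<prec> s} \<subset> {u\<in>Z. u \<prec> t}"
    using assms(2,3) irrefl trans by blast
qed

lemma rank_in_less_card:
  assumes "finite Z" "t \<in> Z"
  shows "rank_in Z t < card Z"
  unfolding rank_in_def using assms irrefl by (intro psubset_card_mono) auto

lemma bij_betw_rank_in:
  assumes "finite Z"
  shows "bij_betw (rank_in Z) Z {..<card Z}"
proof -
  have "inj_on (rank_in Z) Z"
  proof (rule inj_onI)
    fix s t assume "s \<in> Z" "t \<in> Z" "rank_in Z s = rank_in Z t"
    then show "s = t" using total[of s t] rank_in_less[OF assms, of s t] rank_in_less[OF assms, of t s]
      by auto
  qed
  moreover have "rank_in Z ` Z \<subseteq> {..<card Z}"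
    using rank_in_less_card[OF assms] by auto
  ultimately show ?thesis
    by (simp add: bij_betw_def card_image card_subset_eq)
qed

lemma exists_minimal:
  assumes "finite Z" "Z \<noteq> {}"
  obtains t0 where "t0 \<in> Z" "\<And>u. u \<in> Z \<Longrightarrow> \<not> u \<prec> t0"
proof -
  have "0 < card Z" using assms by (simp add: card_gt_0_iff)
  then have "0 \<in> rank_in Z ` Z"
    using bij_betw_rank_in[OF assms(1)] by (simp add: bij_betw_def)
  then obtain t0 where t0: "t0 \<in> Z" "rank_in Z t0 = 0" by force
  then have "\<not> u \<prec> t0" if "u \<in> Z" for u
    using that assms(1) by (simp add: rank_in_def)
  with t0(1) show ?thesis using that by blast
qed

lemma rank_in_less_card_iff:
  assumes "finite Z" "t \<in> Z"
    and w_mono: "\<And>s t. s \<in> Z \<Longrightarrow> t \<in> Z \<Longrightarrow> s \<prec> t \<Longrightarrow> w s \<le> w t"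
    and P_down: "\<And>y y'. P y \<Longrightarrow> y' \<le> y \<Longrightarrow> P y'"
  shows "rank_in Z t < card {s\<in>Z. P (w s)} \<longleftrightarrow> P (w t)"
proof
  assume "P (w t)"
  have "{u\<in>Z. u \<prec> t} \<subseteq> {s\<in>Z. P (w s)}"
    using w_mono[OF _ assms(2)] P_down[OF \<open>P (w t)\<close>] by auto
  moreover have "t \<in> {s\<in>Z. P (w s)} - {u\<in>Z. u \<prec> t}"
    using assms(2) \<open>P (w t)\<close> irrefl by simp
  ultimately have "{u\<in>Z. u \<prec> t} \<subset> {s\<in>Z. P (w s)}" by blast
  then show "rank_in Z t < card {s\<in>Z. P (w s)}"
    unfolding rank_in_def using assms(1) by (intro psubset_card_mono) auto
next
  assume less: "rank_in Z t < card {s\<in>Z. P (w s)}"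
  show "P (w t)"
  proof (rule ccontr)
    assume "\<not> P (w t)"
    have "s \<prec> t" if "s \<in> Z" "P (w s)" for s
    proof -
      have "\<not> t \<prec> s" using w_mono[OF assms(2) that(1)] P_down[OF that(2)] \<open>\<not> P (w t)\<close> by blast
      moreover have "s \<noteq> t" using that(2) \<open>\<not> P (w t)\<close> by blast
      ultimately show ?thesis using total by blast
    qed
    then have "card {s\<in>Z. P (w s)} \<le> rank_in Z t"
      unfolding rank_in_def using assms(1) by (intro card_mono) auto
    with less show False by simp
  qed
qed

end

lemma sum_dist_transpose_le:
  fixes p w :: "'a \<Rightarrow> real"
  assumes "finite Z" "t0 \<in> Z" "s0 \<in> Z" "p t0 \<le> p s0" "w s0 \<le> w t0"
  shows "(\<Sum>t\<in>Z. \<bar>p t - w (transpose t0 s0 t)\<bar>) \<le> (\<Sum>t\<in>Z. \<bar>p t - w t\<bar>)"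
proof (cases "t0 = s0")
  case False
  have split: "(\<Sum>t\<in>Z. f t) = f t0 + f s0 + (\<Sum>t\<in>Z - {t0, s0}. f t)" for f :: "'a \<Rightarrow> real"
  proof -
    have "s0 \<in> Z - {t0}" using assms(3) False by simp
    then have "(\<Sum>t\<in>Z - {t0}. f t) = f s0 + (\<Sum>t\<in>Z - {t0} - {s0}. f t)"
      using assms(1) by (intro sum.remove) auto
    moreover have "Z - {t0} - {s0} = Z - {t0, s0}" by auto
    ultimately show ?thesis using sum.remove[OF assms(1,2), of f] by simp
  qed
  have "(\<Sum>t\<in>Z - {t0, s0}. \<bar>p t - w (transpose t0 s0 t)\<bar>) = (\<Sum>t\<in>Z - {t0, s0}. \<bar>p t - w t\<bar>)"
    by (rule sum.cong) auto
  then show ?thesis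
    using assms(4,5)
    by (simp only: split[of "\<lambda>t. \<bar>p t - w (transpose t0 s0 t)\<bar>"] split[of "\<lambda>t. \<bar>p t - w t\<bar>"])
      (simp add: abs_if)
qed simp

context strict_total_order
begin

lemma rearrangement_extend_least:
  fixes p w :: "'a \<Rightarrow> real"
  assumes "finite Z" "t0 \<in> Z" "\<And>u. u \<in> Z \<Longrightarrow> \<not> u \<prec> t0" "\<And>u. u \<in> Z \<Longrightarrow> w t0 \<le> w u"
    and \<sigma>: "\<sigma> permutes Z - {t0}"
      "\<forall>s\<in>Z - {t0}. \<forall>t\<in>Z - {t0}. s \<prec> t \<longrightarrow> w (\<sigma> s) \<le> w (\<sigma> t)"
      "(\<Sum>t\<in>Z - {t0}. \<bar>p t - w (\<sigma> t)\<bar>) \<le> (\<Sum>t\<in>Z - {t0}. \<bar>p t - w t\<bar>)"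
  shows "\<sigma> permutes Z" "\<forall>s\<in>Z. \<forall>t\<in>Z. s \<prec> t \<longrightarrow> w (\<sigma> s) \<le> w (\<sigma> t)"
    "(\<Sum>t\<in>Z. \<bar>p t - w (\<sigma> t)\<bar>) \<le> (\<Sum>t\<in>Z. \<bar>p t - w t\<bar>)"
proof -
  show perm: "\<sigma> permutes Z" using \<sigma>(1) by (rule permutes_subset) auto
  have \<sigma>_t0: "\<sigma> t0 = t0" using \<sigma>(1) by (simp add: permutes_not_in)
  show "\<forall>s\<in>Z. \<forall>t\<in>Z. s \<prec> t \<longrightarrow> w (\<sigma> s) \<le> w (\<sigma> t)"
  proof (intro ballI impI)
    fix s t assume st: "s \<in> Z" "t \<in> Z" "s \<prec> t"
    then have "t \<noteq> t0" using assms(3) by blast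
    show "w (\<sigma> s) \<le> w (\<sigma> t)"
    proof (cases "s = t0")
      case True
      then show ?thesis using \<sigma>_t0 assms(4) permutes_in_image[OF perm] st(2) by simp
    next
      case False
      then show ?thesis using \<sigma>(2) st \<open>t \<noteq> t0\<close> by simp
    qed
  qed
  show "(\<Sum>t\<in>Z. \<bar>p t - w (\<sigma> t)\<bar>) \<le> (\<Sum>t\<in>Z. \<bar>p t - w t\<bar>)"
    using \<sigma>(3) \<sigma>_t0 sum.remove[OF assms(1,2), of "\<lambda>t. \<bar>p t - w (\<sigma> t)\<bar>"]
      sum.remove[OF assms(1,2), of "\<lambda>t. \<bar>p t - w t\<bar>"] by simp
qed

lemma swap_min_to_least:
  fixes p w :: "'a \<Rightarrow> real"
  assumes "finite Z" "Z \<noteq> {}" and p_mono: "\<And>s t. s \<in> Z \<Longrightarrow> t \<in> Z \<Longrightarrow> s \<prec> t \<Longrightarrow> p s \<le> p t"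
  obtains t0 \<tau> where "t0 \<in> Z" "\<And>u. u \<in> Z \<Longrightarrow> \<not> u \<prec> t0" "\<tau> permutes Z"
    "\<And>u. u \<in> Z \<Longrightarrow> w (\<tau> t0) \<le> w (\<tau> u)"
    "(\<Sum>t\<in>Z. \<bar>p t - w (\<tau> t)\<bar>) \<le> (\<Sum>t\<in>Z. \<bar>p t - w t\<bar>)"
proof -
  obtain t0 where t0: "t0 \<in> Z" "\<And>u. u \<in> Z \<Longrightarrow> \<not> u \<prec> t0"
    using exists_minimal[OF assms(1,2)] by blast
  have "Min (w ` Z) \<in> w ` Z" using assms(1,2) by simp
  then obtain s0 where "s0 \<in> Z" "w s0 = Min (w ` Z)" by auto
  then have s0: "s0 \<in> Z" "\<And>u. u \<in> Z \<Longrightarrow> w s0 \<le> w u"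
    using assms(1) by simp_all
  have "p t0 \<le> p s0"
  proof (cases "t0 = s0")
    case False
    then have "t0 \<prec> s0" using total t0(2)[OF s0(1)] by blast
    then show ?thesis using p_mono t0(1) s0(1) by blast
  qed simp
  then have "(\<Sum>t\<in>Z. \<bar>p t - w (transpose t0 s0 t)\<bar>) \<le> (\<Sum>t\<in>Z. \<bar>p t - w t\<bar>)"
    using assms(1) t0(1) s0 by (intro sum_dist_transpose_le)
  moreover have "w (transpose t0 s0 t0) \<le> w (transpose t0 s0 u)" if "u \<in> Z" for u
    using s0 that t0(1) by (simp add: transpose_def)
  ultimately show ?thesis
    using that[OF t0 permutes_swap_id[OF t0(1) s0(1)]] by blast
qed

text \<open>Induction on \<open>Z\<close>: after moving the smallest value of \<open>w\<close> onto a \<open>\<prec>\<close>-least point, sort the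
  remaining points.\<close>

lemma monotone_rearrangement:
  fixes p w :: "'a \<Rightarrow> real"
  assumes "finite Z" and p_mono: "\<And>s t. s \<in> Z \<Longrightarrow> t \<in> Z \<Longrightarrow> s \<prec> t \<Longrightarrow> p s \<le> p t"
  shows "\<exists>\<sigma>. \<sigma> permutes Z \<and> (\<forall>s\<in>Z. \<forall>t\<in>Z. s \<prec> t \<longrightarrow> w (\<sigma> s) \<le> w (\<sigma> t)) \<and>
      (\<Sum>t\<in>Z. \<bar>p t - w (\<sigma> t)\<bar>) \<le> (\<Sum>t\<in>Z. \<bar>p t - w t\<bar>)"
  using assms
proof (induction Z arbitrary: w rule: finite_psubset_induct)
  case (psubset Z)
  show ?case
  proof (cases "Z = {}")
    case True
    then show ?thesis by (intro exI[of _ id]) (simp add: permutes_id id_def)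
  next
    case False
    obtain t0 \<tau> where t0: "t0 \<in> Z" "\<And>u. u \<in> Z \<Longrightarrow> \<not> u \<prec> t0" and \<tau>: "\<tau> permutes Z"
      and least: "\<And>u. u \<in> Z \<Longrightarrow> (w \<circ> \<tau>) t0 \<le> (w \<circ> \<tau>) u"
      and swap: "(\<Sum>t\<in>Z. \<bar>p t - (w \<circ> \<tau>) t\<bar>) \<le> (\<Sum>t\<in>Z. \<bar>p t - w t\<bar>)"
      using swap_min_to_least[where w = w and p = p, OF psubset.hyps(1) False psubset.prems] by auto
    have "\<exists>\<sigma>'. \<sigma>' permutes Z - {t0} \<and>
        (\<forall>s\<in>Z - {t0}. \<forall>t\<in>Z - {t0}. s \<prec> t \<longrightarrow> (w \<circ> \<tau>) (\<sigma>' s) \<le> (w \<circ> \<tau>) (\<sigma>' t)) \<and>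
        (\<Sum>t\<in>Z - {t0}. \<bar>p t - (w \<circ> \<tau>) (\<sigma>' t)\<bar>) \<le> (\<Sum>t\<in>Z - {t0}. \<bar>p t - (w \<circ> \<tau>) t\<bar>)"
      using t0(1) psubset.prems by (intro psubset.IH) auto
    then obtain \<sigma>' where \<sigma>': "\<sigma>' permutes Z"
      "\<forall>s\<in>Z. \<forall>t\<in>Z. s \<prec> t \<longrightarrow> (w \<circ> \<tau>) (\<sigma>' s) \<le> (w \<circ> \<tau>) (\<sigma>' t)"
      "(\<Sum>t\<in>Z. \<bar>p t - (w \<circ> \<tau>) (\<sigma>' t)\<bar>) \<le> (\<Sum>t\<in>Z. \<bar>p t - (w \<circ> \<tau>) t\<bar>)"
      using rearrangement_extend_least[where w = "w \<circ> \<tau>" and p = p, OF psubset.hyps(1) t0 least]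
      by blast
    have "\<tau> \<circ> \<sigma>' permutes Z" using \<sigma>'(1) \<tau> by (rule permutes_compose)
    then show ?thesis
      using \<sigma>'(2,3) swap by (intro exI[of _ "\<tau> \<circ> \<sigma>'"]) (auto simp: comp_def)
  qed
qed

end

section \<open>The dynamic program\<close>

definition forecast_less :: "(nat \<Rightarrow> real) \<Rightarrow> nat \<Rightarrow> nat \<Rightarrow> bool" where
  "forecast_less p s t \<longleftrightarrow> p s < p t \<or> (p s = p t \<and> s < t)"

lemma strict_total_order_forecast_less: "strict_total_order (forecast_less p)"
  by unfold_locales (auto simp: forecast_less_def)

lemma forecast_less_mono: "forecast_less p s t \<Longrightarrow> p s \<le> p t"
  by (auto simp: forecast_less_def)

definition class_rank :: "nat \<Rightarrow> (nat \<Rightarrow> real) \<Rightarrow> (nat \<Rightarrow> real) \<Rightarrow> nat \<Rightarrow> nat" where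
  "class_rank T x p t = card {s. s < T \<and> x s = x t \<and> forecast_less p s t}"

definition in_block ::
    "nat \<Rightarrow> (nat \<Rightarrow> real) \<Rightarrow> (nat \<Rightarrow> real) \<Rightarrow> nat \<Rightarrow> nat \<Rightarrow> nat \<Rightarrow> nat \<Rightarrow> nat \<Rightarrow> bool" where
  "in_block T x p a b i j t \<longleftrightarrow>
     (if x t = 0 then a \<le> class_rank T x p t \<and> class_rank T x p t < i
      else b \<le> class_rank T x p t \<and> class_rank T x p t < j)"

text \<open>\<open>block_value a b i j\<close> is the frequency of ones in the block \<open>(a, b, i, j)\<close>, the only constant
  prediction on it that is calibrated.\<close>

definition block_value :: "nat \<Rightarrow> nat \<Rightarrow> nat \<Rightarrow> nat \<Rightarrow> real" where
  "block_value a b i j = real (j - b) / real ((i - a) + (j - b))"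

definition block_cost ::
    "nat \<Rightarrow> (nat \<Rightarrow> real) \<Rightarrow> (nat \<Rightarrow> real) \<Rightarrow> nat \<Rightarrow> nat \<Rightarrow> nat \<Rightarrow> nat \<Rightarrow> real" where
  "block_cost T x p a b i j =
     (\<Sum>t<T. if in_block T x p a b i j t then \<bar>p t - block_value a b i j\<bar> else 0)"

definition dp_preds :: "nat \<Rightarrow> nat \<Rightarrow> (nat \<times> nat) set" where
  "dp_preds i j = {(a, b). a \<le> i \<and> b \<le> j \<and> (a, b) \<noteq> (i, j)}"

text \<open>\<open>dp_cost T x p i j\<close> is the least cost of cutting the \<open>i\<close> lowest-ranked zeros and the \<open>j\<close>
  lowest-ranked ones into blocks, each predicted by its own \<open>block_value\<close>.\<close>

function dp_cost :: "nat \<Rightarrow> (nat \<Rightarrow> real) \<Rightarrow> (nat \<Rightarrow> real) \<Rightarrow> nat \<Rightarrow> nat \<Rightarrow> real" where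
  "dp_cost T x p i j = (if i = 0 \<and> j = 0 then 0 else
     Min ((\<lambda>(a, b). dp_cost T x p a b + block_cost T x p a b i j) ` dp_preds i j))"
  by auto
termination
  by (relation "measure (\<lambda>(T, x, p, i, j). i + j)") (auto simp: dp_preds_def)

declare dp_cost.simps [simp del]

lemma dp_cost_0_0 [simp]: "dp_cost T x p 0 0 = 0"
  by (simp add: dp_cost.simps)

lemma finite_dp_preds: "finite (dp_preds i j)"
  by (rule finite_subset[of _ "{..i} \<times> {..j}"]) (auto simp: dp_preds_def)

lemma dp_cost_rec: "(i, j) \<noteq> (0, 0) \<Longrightarrow>
    dp_cost T x p i j = Min ((\<lambda>(a, b). dp_cost T x p a b + block_cost T x p a b i j) ` dp_preds i j)"
  by (subst dp_cost.simps) auto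

lemma dp_cost_le:
  assumes "a \<le> i" "b \<le> j" "(a, b) \<noteq> (i, j)"
  shows "dp_cost T x p i j \<le> dp_cost T x p a b + block_cost T x p a b i j"
proof -
  have "(i, j) \<noteq> (0, 0)" "(a, b) \<in> dp_preds i j" using assms by (auto simp: dp_preds_def)
  then show ?thesis
    using finite_dp_preds by (subst dp_cost_rec) (auto intro!: Min_le)
qed

lemma dp_cost_attained:
  assumes "(i, j) \<noteq> (0, 0)"
  obtains a b where "a \<le> i" "b \<le> j" "(a, b) \<noteq> (i, j)"
    "dp_cost T x p i j = dp_cost T x p a b + block_cost T x p a b i j"
proof -
  have "(0, 0) \<in> dp_preds i j" using assms by (auto simp: dp_preds_def)
  then have "dp_cost T x p i j \<in> (\<lambda>(a, b). dp_cost T x p a b + block_cost T x p a b i j) ` dp_preds i j"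
    unfolding dp_cost_rec[OF assms] using finite_dp_preds by (intro Min_in) auto
  then show ?thesis using that by (auto simp: dp_preds_def)
qed

lemma block_value_bounds: "0 \<le> block_value a b i j" "block_value a b i j \<le> 1"
  by (auto simp: block_value_def divide_le_eq_1)

lemma class_rank_eq_rank_in:
  "x t = c \<Longrightarrow> class_rank T x p t = strict_total_order.rank_in (forecast_less p) {s. s < T \<and> x s = c} t"
  unfolding class_rank_def strict_total_order.rank_in_def[OF strict_total_order_forecast_less]
  by (rule arg_cong[where f = card]) auto

lemma bij_betw_class_rank:
  "bij_betw (class_rank T x p) {s. s < T \<and> x s = c} {..<card {s. s < T \<and> x s = c}}"
  using strict_total_order.bij_betw_rank_in[OF strict_total_order_forecast_less, of "{s. s < T \<and> x s = c}" p]
  by (rule bij_betw_cong[THEN iffD1, rotated]) (auto simp: class_rank_eq_rank_in)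

lemma class_rank_less_card: "t < T \<Longrightarrow> class_rank T x p t < card {s. s < T \<and> x s = x t}"
  using bij_betw_class_rank[of T x p "x t"] by (auto simp: bij_betw_def)

lemma card_class_rank_interval:
  assumes "i \<le> card {s. s < T \<and> x s = c}"
  shows "card {t. t < T \<and> x t = c \<and> a \<le> class_rank T x p t \<and> class_rank T x p t < i} = i - a"
    (is "card ?S = _")
proof -
  let ?Z = "{s. s < T \<and> x s = c}"
  have inj: "inj_on (class_rank T x p) ?Z" and img: "class_rank T x p ` ?Z = {..<card ?Z}"
    using bij_betw_class_rank[of T x p c] by (auto simp: bij_betw_def)
  have "card ?S = card (class_rank T x p ` ?S)"
    using inj by (intro card_image[symmetric] inj_on_subset[OF inj]) auto
  also have "class_rank T x p ` ?S = class_rank T x p ` ?Z \<inter> {a..<i}" by auto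
  also have "\<dots> = {a..<i}" using img assms by auto
  finally show ?thesis by simp
qed

section \<open>The calibration distance is the value of the dynamic program\<close>

lemma calibration_sum_level:
  fixes x q :: "'a \<Rightarrow> real"
  assumes "finite S"
  shows "(\<Sum>t\<in>S. (x t - q t) * (if q t = \<alpha> then 1 else 0)) = (\<Sum>t\<in>{t\<in>S. q t = \<alpha>}. x t - \<alpha>)"
proof -
  have "(\<Sum>t\<in>S. (x t - q t) * (if q t = \<alpha> then 1 else 0)) = (\<Sum>t\<in>S. if q t = \<alpha> then x t - \<alpha> else 0)"
    by (rule sum.cong) auto
  then show ?thesis using assms by (simp add: sum.inter_filter)
qed

lemma sum_dist_extend:
  fixes p q :: "'a \<Rightarrow> real"
  assumes "finite S" "finite B" "S \<inter> B = {}"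
  shows "(\<Sum>t\<in>S \<union> B. \<bar>p t - (if t \<in> S then q t else v)\<bar>) =
    (\<Sum>t\<in>S. \<bar>p t - q t\<bar>) + (\<Sum>t\<in>B. \<bar>p t - v\<bar>)"
proof -
  have "(\<Sum>t\<in>B. \<bar>p t - (if t \<in> S then q t else v)\<bar>) = (\<Sum>t\<in>B. \<bar>p t - v\<bar>)"
    using assms(3) by (intro sum.cong) auto
  then show ?thesis using assms by (simp add: sum.union_disjoint)
qed

lemma sum_dist_permutes_mono:
  fixes p w :: "'a \<Rightarrow> real"
  assumes "\<sigma> permutes Z" "Z \<subseteq> U" "finite U"
    and "(\<Sum>t\<in>Z. \<bar>p t - w (\<sigma> t)\<bar>) \<le> (\<Sum>t\<in>Z. \<bar>p t - w t\<bar>)"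
  shows "(\<Sum>t\<in>U. \<bar>p t - w (\<sigma> t)\<bar>) \<le> (\<Sum>t\<in>U. \<bar>p t - w t\<bar>)"
proof -
  have "(\<Sum>t\<in>U - Z. \<bar>p t - w (\<sigma> t)\<bar>) = (\<Sum>t\<in>U - Z. \<bar>p t - w t\<bar>)"
    using assms(1) by (intro sum.cong) (auto simp: permutes_not_in)
  then show ?thesis
    using assms(4) sum.subset_diff[OF assms(2,3), of "\<lambda>t. \<bar>p t - w (\<sigma> t)\<bar>"]
      sum.subset_diff[OF assms(2,3), of "\<lambda>t. \<bar>p t - w t\<bar>"] by linarith
qed

lemma calib_set_permutes:
  assumes "\<sigma> permutes {..<T}" "\<And>t. x (\<sigma> t) = x t" "q \<in> calib_set T x"
  shows "q \<circ> \<sigma> \<in> calib_set T x"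
  unfolding calib_set_def
proof (intro CollectI conjI allI impI)
  fix t assume "t < T"
  then have "\<sigma> t < T" using permutes_in_image[OF assms(1)] by simp
  then show "0 \<le> (q \<circ> \<sigma>) t" "(q \<circ> \<sigma>) t \<le> 1" using assms(3) by (auto simp: calib_set_def)
next
  fix \<alpha> :: real assume "0 \<le> \<alpha> \<and> \<alpha> \<le> 1"
  have "(\<Sum>t<T. (x t - (q \<circ> \<sigma>) t) * (if (q \<circ> \<sigma>) t = \<alpha> then 1 else 0)) =
      (\<Sum>t<T. (x (\<sigma> t) - q (\<sigma> t)) * (if q (\<sigma> t) = \<alpha> then 1 else 0))"
    by (simp add: assms(2))
  also have "\<dots> = (\<Sum>t<T. (x t - q t) * (if q t = \<alpha> then 1 else 0))"
    by (rule sum.reindex_bij_betw[OF permutes_imp_bij[OF assms(1)]])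
  also have "\<dots> = 0" using assms(3) \<open>0 \<le> \<alpha> \<and> \<alpha> \<le> 1\<close> by (simp add: calib_set_def)
  finally show "(\<Sum>t<T. (x t - (q \<circ> \<sigma>) t) * (if (q \<circ> \<sigma>) t = \<alpha> then 1 else 0)) = 0" .
qed

locale binary_forecast =
  fixes T :: nat and x p :: "nat \<Rightarrow> real"
  assumes x_01: "\<And>t. t < T \<Longrightarrow> x t = 0 \<or> x t = 1"
    and p_01: "\<And>t. t < T \<Longrightarrow> 0 \<le> p t \<and> p t \<le> 1"
begin

abbreviation "n0 \<equiv> card {t. t < T \<and> x t = 0}"
abbreviation "n1 \<equiv> card {t. t < T \<and> x t = 1}"
abbreviation "rank \<equiv> class_rank T x p"

definition calibrated_on :: "nat set \<Rightarrow> (nat \<Rightarrow> real) \<Rightarrow> bool" where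
  "calibrated_on S q \<longleftrightarrow> (\<forall>\<alpha>. (\<Sum>t\<in>{t\<in>S. q t = \<alpha>}. x t - \<alpha>) = 0)"

lemma calib_set_iff:
  "q \<in> calib_set T x \<longleftrightarrow> (\<forall>t<T. 0 \<le> q t \<and> q t \<le> 1) \<and> calibrated_on {..<T} q"
proof -
  have level: "(\<Sum>t<T. (x t - q t) * (if q t = \<alpha> then 1 else 0)) = (\<Sum>t\<in>{t\<in>{..<T}. q t = \<alpha>}. x t - \<alpha>)"
    for \<alpha> by (rule calibration_sum_level) simp
  show ?thesis
  proof
    assume "q \<in> calib_set T x"
    then have q01: "\<forall>t<T. 0 \<le> q t \<and> q t \<le> 1"
      and cal: "\<And>\<alpha>. 0 \<le> \<alpha> \<and> \<alpha> \<le> 1 \<Longrightarrow> (\<Sum>t\<in>{t\<in>{..<T}. q t = \<alpha>}. x t - \<alpha>) = 0"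
      by (auto simp: calib_set_def level)
    have "(\<Sum>t\<in>{t\<in>{..<T}. q t = \<alpha>}. x t - \<alpha>) = 0" for \<alpha>
    proof (cases "0 \<le> \<alpha> \<and> \<alpha> \<le> 1")
      case False
      then have "{t\<in>{..<T}. q t = \<alpha>} = {}" using q01 by auto
      then show ?thesis by (simp only: sum.empty)
    qed (rule cal)
    then show "(\<forall>t<T. 0 \<le> q t \<and> q t \<le> 1) \<and> calibrated_on {..<T} q"
      using q01 by (simp add: calibrated_on_def)
  next
    assume "(\<forall>t<T. 0 \<le> q t \<and> q t \<le> 1) \<and> calibrated_on {..<T} q"
    then show "q \<in> calib_set T x" by (simp add: calib_set_def calibrated_on_def level)
  qed
qed

lemma calibrated_on_extend:
  assumes "calibrated_on S q" "finite S" "finite B" "S \<inter> B = {}" "(\<Sum>t\<in>B. x t - v) = 0"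
  shows "calibrated_on (S \<union> B) (\<lambda>t. if t \<in> S then q t else v)"
  unfolding calibrated_on_def
proof
  fix \<alpha>
  have "{t\<in>S \<union> B. (if t \<in> S then q t else v) = \<alpha>} = {t\<in>S. q t = \<alpha>} \<union> (if v = \<alpha> then B else {})"
    using assms(4) by auto
  moreover have "(\<Sum>t\<in>{t\<in>S. q t = \<alpha>}. x t - \<alpha>) = 0"
    using assms(1) by (simp add: calibrated_on_def)
  ultimately show "(\<Sum>t\<in>{t\<in>S \<union> B. (if t \<in> S then q t else v) = \<alpha>}. x t - \<alpha>) = 0"
    using assms(2-5) by (cases "v = \<alpha>") (simp_all add: sum.union_disjoint disjoint_iff)
qed

definition rank_prefix :: "nat \<Rightarrow> nat \<Rightarrow> nat set" where
  "rank_prefix i j = {t. t < T \<and> rank t < (if x t = 0 then i else j)}"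

definition block :: "nat \<Rightarrow> nat \<Rightarrow> nat \<Rightarrow> nat \<Rightarrow> nat set" where
  "block a b i j = {t. t < T \<and> in_block T x p a b i j t}"

lemma rank_prefix_0_0: "rank_prefix 0 0 = {}"
  by (simp add: rank_prefix_def)

lemma rank_prefix_all: "rank_prefix n0 n1 = {..<T}"
proof -
  have "t \<in> rank_prefix n0 n1" if "t < T" for t
  proof -
    have "rank t < card {s. s < T \<and> x s = x t}" by (rule class_rank_less_card[OF that])
    then show ?thesis using x_01[OF that] that by (auto simp: rank_prefix_def)
  qed
  moreover have "rank_prefix n0 n1 \<subseteq> {..<T}" by (auto simp: rank_prefix_def)
  ultimately show ?thesis by blast
qed

lemma rank_prefix_split:
  assumes "a \<le> i" "b \<le> j"
  shows "rank_prefix i j = rank_prefix a b \<union> block a b i j" "rank_prefix a b \<inter> block a b i j = {}"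
  using assms by (auto simp: rank_prefix_def block_def in_block_def)

lemma finite_block: "finite (block a b i j)"
  by (simp add: block_def)

lemma block_cost_eq_sum:
  "block_cost T x p a b i j = (\<Sum>t\<in>block a b i j. \<bar>p t - block_value a b i j\<bar>)"
proof -
  have "block a b i j = {t\<in>{..<T}. in_block T x p a b i j t}" by (auto simp: block_def)
  then show ?thesis unfolding block_cost_def by (simp only: sum.inter_filter[OF finite_lessThan])
qed

lemma block_counts:
  assumes "a \<le> i" "i \<le> n0" "b \<le> j" "j \<le> n1"
  shows "card (block a b i j) = (i - a) + (j - b)" "(\<Sum>t\<in>block a b i j. x t) = real (j - b)"
proof -
  let ?B0 = "{t. t < T \<and> x t = 0 \<and> a \<le> rank t \<and> rank t < i}"
  let ?B1 = "{t. t < T \<and> x t = 1 \<and> b \<le> rank t \<and> rank t < j}"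
  have B: "block a b i j = ?B0 \<union> ?B1"
    using x_01 by (auto simp: block_def in_block_def)
  have card0: "card ?B0 = i - a" and card1: "card ?B1 = j - b"
    using assms card_class_rank_interval by blast+
  have disj: "?B0 \<inter> ?B1 = {}" by auto
  show "card (block a b i j) = (i - a) + (j - b)"
    unfolding B using card0 card1 disj by (simp add: card_Un_disjoint)
  have "(\<Sum>t\<in>?B0. x t) = 0" "(\<Sum>t\<in>?B1. x t) = real (card ?B1)" by simp_all
  then show "(\<Sum>t\<in>block a b i j. x t) = real (j - b)"
    unfolding B using card1 disj by (simp add: sum.union_disjoint)
qed

lemma block_balanced:
  assumes "a \<le> i" "i \<le> n0" "b \<le> j" "j \<le> n1"
  shows "(\<Sum>t\<in>block a b i j. x t - block_value a b i j) = 0"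
  using block_counts[OF assms] by (simp add: sum_subtractf block_value_def)

lemma calibrated_prefix_forecast:
  assumes "i \<le> n0" "j \<le> n1"
  shows "\<exists>q. (\<forall>t. 0 \<le> q t \<and> q t \<le> 1) \<and> calibrated_on (rank_prefix i j) q \<and>
    (\<Sum>t\<in>rank_prefix i j. \<bar>p t - q t\<bar>) = dp_cost T x p i j"
  using assms
proof (induction "i + j" arbitrary: i j rule: less_induct)
  case less
  show ?case
  proof (cases "(i, j) = (0, 0)")
    case True
    then show ?thesis by (intro exI[of _ "\<lambda>_. 0"]) (auto simp: rank_prefix_0_0 calibrated_on_def)
  next
    case False
    obtain a b where ab: "a \<le> i" "b \<le> j" "(a, b) \<noteq> (i, j)"
      and dp: "dp_cost T x p i j = dp_cost T x p a b + block_cost T x p a b i j"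
      using dp_cost_attained[OF False] by blast
    have "a + b < i + j" using ab by auto
    then obtain q where q: "\<forall>t. 0 \<le> q t \<and> q t \<le> 1" "calibrated_on (rank_prefix a b) q"
      "(\<Sum>t\<in>rank_prefix a b. \<bar>p t - q t\<bar>) = dp_cost T x p a b"
      using less.hyps[of a b] ab less.prems by auto
    define v where "v = block_value a b i j"
    define q' where "q' t = (if t \<in> rank_prefix a b then q t else v)" for t
    note split = rank_prefix_split[OF ab(1,2)]
    have fin: "finite (rank_prefix a b)" by (simp add: rank_prefix_def)
    have "calibrated_on (rank_prefix i j) q'"
      unfolding split(1) q'_def v_def
      using q(2) fin finite_block split(2) block_balanced ab less.prems
      by (intro calibrated_on_extend) auto
    moreover have "(\<Sum>t\<in>rank_prefix i j. \<bar>p t - q' t\<bar>) = dp_cost T x p i j"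
      unfolding split(1) q'_def sum_dist_extend[OF fin finite_block split(2)]
      using q(3) dp by (simp add: block_cost_eq_sum v_def)
    moreover have "\<forall>t. 0 \<le> q' t \<and> q' t \<le> 1"
      using q(1) block_value_bounds by (simp add: q'_def v_def)
    ultimately show ?thesis by blast
  qed
qed

lemma exists_calibrated_with_dp_cost:
  "\<exists>q\<in>calib_set T x. (\<Sum>t<T. \<bar>p t - q t\<bar>) = dp_cost T x p n0 n1"
proof -
  obtain q where "\<forall>t. 0 \<le> q t \<and> q t \<le> 1" "calibrated_on {..<T} q"
    "(\<Sum>t<T. \<bar>p t - q t\<bar>) = dp_cost T x p n0 n1"
    using calibrated_prefix_forecast[OF order_refl order_refl] unfolding rank_prefix_all by blast
  then show ?thesis by (intro bexI[of _ q]) (auto simp: calib_set_iff)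
qed

definition class_monotone :: "(nat \<Rightarrow> real) \<Rightarrow> bool" where
  "class_monotone q \<longleftrightarrow> (\<forall>s<T. \<forall>t<T. x s = x t \<longrightarrow> forecast_less p s t \<longrightarrow> q s \<le> q t)"

lemma permutes_class_preserves:
  assumes "\<sigma> permutes {t. t < T \<and> x t = c}"
  shows "x (\<sigma> t) = x t"
  using permutes_in_image[OF assms, of t] permutes_not_in[OF assms, of t] by (cases "t < T \<and> x t = c") auto

lemma class_rearrangement:
  "\<exists>\<sigma>. \<sigma> permutes {t. t < T \<and> x t = c} \<and>
     (\<forall>s<T. \<forall>t<T. x s = c \<longrightarrow> x t = c \<longrightarrow> forecast_less p s t \<longrightarrow> w (\<sigma> s) \<le> w (\<sigma> t)) \<and>
     (\<Sum>t<T. \<bar>p t - w (\<sigma> t)\<bar>) \<le> (\<Sum>t<T. \<bar>p t - w t\<bar>)"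
proof -
  have "\<exists>\<sigma>. \<sigma> permutes {t. t < T \<and> x t = c} \<and>
      (\<forall>s\<in>{t. t < T \<and> x t = c}. \<forall>t\<in>{t. t < T \<and> x t = c}. forecast_less p s t \<longrightarrow> w (\<sigma> s) \<le> w (\<sigma> t)) \<and>
      (\<Sum>t\<in>{t. t < T \<and> x t = c}. \<bar>p t - w (\<sigma> t)\<bar>) \<le> (\<Sum>t\<in>{t. t < T \<and> x t = c}. \<bar>p t - w t\<bar>)"
    by (rule strict_total_order.monotone_rearrangement[OF strict_total_order_forecast_less])
      (auto simp: forecast_less_mono)
  then obtain \<sigma> where \<sigma>: "\<sigma> permutes {t. t < T \<and> x t = c}"
    "\<forall>s\<in>{t. t < T \<and> x t = c}. \<forall>t\<in>{t. t < T \<and> x t = c}. forecast_less p s t \<longrightarrow> w (\<sigma> s) \<le> w (\<sigma> t)"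
    "(\<Sum>t\<in>{t. t < T \<and> x t = c}. \<bar>p t - w (\<sigma> t)\<bar>) \<le> (\<Sum>t\<in>{t. t < T \<and> x t = c}. \<bar>p t - w t\<bar>)"
    by blast
  moreover have "(\<Sum>t<T. \<bar>p t - w (\<sigma> t)\<bar>) \<le> (\<Sum>t<T. \<bar>p t - w t\<bar>)"
    by (rule sum_dist_permutes_mono[OF \<sigma>(1) _ _ \<sigma>(3)]) auto
  ultimately show ?thesis by auto
qed

lemma exists_class_monotone_rearrangement:
  assumes "q \<in> calib_set T x"
  obtains q' where "q' \<in> calib_set T x" "class_monotone q'"
    "(\<Sum>t<T. \<bar>p t - q' t\<bar>) \<le> (\<Sum>t<T. \<bar>p t - q t\<bar>)"
proof -
  obtain \<sigma>1 where \<sigma>1: "\<sigma>1 permutes {t. t < T \<and> x t = 1}"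
    "\<forall>s<T. \<forall>t<T. x s = 1 \<longrightarrow> x t = 1 \<longrightarrow> forecast_less p s t \<longrightarrow> q (\<sigma>1 s) \<le> q (\<sigma>1 t)"
    "(\<Sum>t<T. \<bar>p t - q (\<sigma>1 t)\<bar>) \<le> (\<Sum>t<T. \<bar>p t - q t\<bar>)"
    using class_rearrangement by blast
  obtain \<sigma>0 where \<sigma>0: "\<sigma>0 permutes {t. t < T \<and> x t = 0}"
    "\<forall>s<T. \<forall>t<T. x s = 0 \<longrightarrow> x t = 0 \<longrightarrow> forecast_less p s t \<longrightarrow> q (\<sigma>1 (\<sigma>0 s)) \<le> q (\<sigma>1 (\<sigma>0 t))"
    "(\<Sum>t<T. \<bar>p t - q (\<sigma>1 (\<sigma>0 t))\<bar>) \<le> (\<Sum>t<T. \<bar>p t - q (\<sigma>1 t)\<bar>)"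
    using class_rearrangement[of 0 "q \<circ> \<sigma>1"] by auto
  define \<sigma> where "\<sigma> = \<sigma>1 \<circ> \<sigma>0"
  have "\<sigma>0 permutes {..<T}" "\<sigma>1 permutes {..<T}"
    by (rule permutes_subset[OF \<sigma>0(1)] permutes_subset[OF \<sigma>1(1)]; auto)+
  then have \<sigma>_perm: "\<sigma> permutes {..<T}"
    unfolding \<sigma>_def by (rule permutes_compose)
  have x_\<sigma>: "x (\<sigma> t) = x t" for t
    using permutes_class_preserves[OF \<sigma>0(1)] permutes_class_preserves[OF \<sigma>1(1)] by (simp add: \<sigma>_def)
  have "q \<circ> \<sigma> \<in> calib_set T x"
    using \<sigma>_perm x_\<sigma> assms by (rule calib_set_permutes)
  moreover have "class_monotone (q \<circ> \<sigma>)"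
    unfolding class_monotone_def
  proof (intro allI impI)
    fix s t assume st: "s < T" "t < T" "x s = x t" "forecast_less p s t"
    show "(q \<circ> \<sigma>) s \<le> (q \<circ> \<sigma>) t"
    proof (cases "x t = 0")
      case True
      then show ?thesis using \<sigma>0(2) st by (simp add: \<sigma>_def)
    next
      case False
      then have "x t = 1" using x_01[OF st(2)] by simp
      moreover have "\<sigma>0 s = s" "\<sigma>0 t = t"
        using False st(3) permutes_not_in[OF \<sigma>0(1)] by auto
      ultimately show ?thesis using \<sigma>1(2) st by (simp add: \<sigma>_def)
    qed
  qed
  moreover have "(\<Sum>t<T. \<bar>p t - (q \<circ> \<sigma>) t\<bar>) \<le> (\<Sum>t<T. \<bar>p t - q t\<bar>)"
    using \<sigma>0(3) \<sigma>1(3) by (simp add: \<sigma>_def)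
  ultimately show ?thesis using that by blast
qed

end

locale monotone_calibrated = binary_forecast +
  fixes q :: "nat \<Rightarrow> real"
  assumes q_calibrated: "q \<in> calib_set T x"
    and q_monotone: "class_monotone q"
begin

definition below :: "real \<Rightarrow> real \<Rightarrow> nat" where
  "below c v = card {t. t < T \<and> x t = c \<and> q t < v}"

definition at_most :: "real \<Rightarrow> real \<Rightarrow> nat" where
  "at_most c v = card {t. t < T \<and> x t = c \<and> q t \<le> v}"

lemma below_le_at_most: "below c v \<le> at_most c v"
  unfolding below_def at_most_def by (rule card_mono) auto

lemma at_most_le_card: "at_most c v \<le> card {t. t < T \<and> x t = c}"
  unfolding at_most_def by (rule card_mono) auto

lemma class_rank_less_count_iff:
  assumes "t < T" "\<And>y y'. P y \<Longrightarrow> y' \<le> y \<Longrightarrow> P y'"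
  shows "rank t < card {s. s < T \<and> x s = x t \<and> P (q s)} \<longleftrightarrow> P (q t)"
proof -
  let ?Z = "{s. s < T \<and> x s = x t}"
  have "strict_total_order.rank_in (forecast_less p) ?Z t < card {s\<in>?Z. P (q s)} \<longleftrightarrow> P (q t)"
    using q_monotone assms
    by (intro strict_total_order.rank_in_less_card_iff[OF strict_total_order_forecast_less])
      (auto simp: class_monotone_def)
  moreover have "{s\<in>?Z. P (q s)} = {s. s < T \<and> x s = x t \<and> P (q s)}" by auto
  ultimately show ?thesis by (simp add: class_rank_eq_rank_in)
qed

lemma level_eq_block:
  "{t. t < T \<and> q t = v} = block (below 0 v) (below 1 v) (at_most 0 v) (at_most 1 v)"
proof -
  have "in_block T x p (below 0 v) (below 1 v) (at_most 0 v) (at_most 1 v) t \<longleftrightarrow> q t = v"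
    if "t < T" for t
  proof -
    have lt: "rank t < card {s. s < T \<and> x s = x t \<and> q s < v} \<longleftrightarrow> q t < v"
      by (rule class_rank_less_count_iff[OF that]) auto
    have le: "rank t < card {s. s < T \<and> x s = x t \<and> q s \<le> v} \<longleftrightarrow> q t \<le> v"
      by (rule class_rank_less_count_iff[OF that]) auto
    show ?thesis
    proof (cases "x t = 0")
      case True
      then show ?thesis using lt le by (auto simp: in_block_def below_def at_most_def)
    next
      case False
      then have "x t = 1" using x_01[OF that] by simp
      then show ?thesis using lt le by (auto simp: in_block_def below_def at_most_def)
    qed
  qed
  then show ?thesis by (auto simp: block_def)
qed

lemma level_block_value:
  assumes "t0 < T" "q t0 = v"
  shows "block_value (below 0 v) (below 1 v) (at_most 0 v) (at_most 1 v) = v"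
proof -
  let ?B = "block (below 0 v) (below 1 v) (at_most 0 v) (at_most 1 v)"
  have counts: "card ?B = (at_most 0 v - below 0 v) + (at_most 1 v - below 1 v)"
    "(\<Sum>t\<in>?B. x t) = real (at_most 1 v - below 1 v)"
    using block_counts[OF below_le_at_most at_most_le_card below_le_at_most at_most_le_card] by simp_all
  have "t0 \<in> ?B" using assms level_eq_block by blast
  then have "card ?B > 0" using finite_block card_gt_0_iff by blast
  have "calibrated_on {..<T} q" using q_calibrated calib_set_iff by blast
  then have "(\<Sum>t\<in>{t\<in>{..<T}. q t = v}. x t - v) = 0" unfolding calibrated_on_def by blast
  moreover have "{t\<in>{..<T}. q t = v} = ?B" using level_eq_block by auto
  ultimately have "(\<Sum>t\<in>?B. x t - v) = 0" by simp
  then have "real (at_most 1 v - below 1 v) = v * card ?B"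
    using counts(2) by (simp add: sum_subtractf)
  then show ?thesis
    using \<open>card ?B > 0\<close> unfolding block_value_def counts(1)[symmetric] by simp
qed

lemma dp_cost_level_step:
  assumes "t0 < T" "q t0 = v"
  shows "dp_cost T x p (at_most 0 v) (at_most 1 v) \<le>
    dp_cost T x p (below 0 v) (below 1 v) + (\<Sum>t\<in>{t. t < T \<and> q t = v}. \<bar>p t - q t\<bar>)"
proof -
  have "block (below 0 v) (below 1 v) (at_most 0 v) (at_most 1 v) \<noteq> {}"
    using assms level_eq_block by blast
  then have "(below 0 v, below 1 v) \<noteq> (at_most 0 v, at_most 1 v)"
    by (auto simp: block_def in_block_def split: if_splits)
  then have "dp_cost T x p (at_most 0 v) (at_most 1 v) \<le>
      dp_cost T x p (below 0 v) (below 1 v) + block_cost T x p (below 0 v) (below 1 v) (at_most 0 v) (at_most 1 v)"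
    by (intro dp_cost_le below_le_at_most)
  also have "block_cost T x p (below 0 v) (below 1 v) (at_most 0 v) (at_most 1 v) =
      (\<Sum>t\<in>{t. t < T \<and> q t = v}. \<bar>p t - q t\<bar>)"
    unfolding block_cost_eq_sum level_block_value[OF assms] level_eq_block[symmetric] by simp
  finally show ?thesis .
qed

lemma dp_cost_below:
  "dp_cost T x p (below 0 \<beta>) (below 1 \<beta>) \<le> (\<Sum>t\<in>{t. t < T \<and> q t < \<beta>}. \<bar>p t - q t\<bar>)"
proof (induction "card (q ` {t. t < T \<and> q t < \<beta>})" arbitrary: \<beta> rule: less_induct)
  case less
  show ?case
  proof (cases "{t. t < T \<and> q t < \<beta>} = {}")
    case True
    then have "below c \<beta> = 0" for c by (simp add: below_def)
    with True show ?thesis by simp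
  next
    case False
    define v where "v = Max (q ` {t. t < T \<and> q t < \<beta>})"
    have v_in: "v \<in> q ` {t. t < T \<and> q t < \<beta>}" unfolding v_def using False by simp
    then obtain t0 where t0: "t0 < T" "q t0 = v" "v < \<beta>" by auto
    have le_v: "q t \<le> v" if "t < T" "q t < \<beta>" for t
      unfolding v_def using that by (intro Max_ge) auto
    have split: "{t. t < T \<and> q t < \<beta>} = {t. t < T \<and> q t < v} \<union> {t. t < T \<and> q t = v}"
      using le_v t0(3) by fastforce
    have "q ` {t. t < T \<and> q t < v} \<subseteq> q ` {t. t < T \<and> q t < \<beta>}"
      using t0(3) by auto
    moreover have "v \<notin> q ` {t. t < T \<and> q t < v}" by auto
    ultimately have "q ` {t. t < T \<and> q t < v} \<subset> q ` {t. t < T \<and> q t < \<beta>}"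
      using v_in by blast
    then have "card (q ` {t. t < T \<and> q t < v}) < card (q ` {t. t < T \<and> q t < \<beta>})"
      by (intro psubset_card_mono) auto
    then have IH: "dp_cost T x p (below 0 v) (below 1 v) \<le> (\<Sum>t\<in>{t. t < T \<and> q t < v}. \<bar>p t - q t\<bar>)"
      by (rule less.hyps)
    have "{t. t < T \<and> x t = c \<and> q t < \<beta>} = {t. t < T \<and> x t = c \<and> q t \<le> v}" for c
      using le_v t0(3) by fastforce
    then have "below c \<beta> = at_most c v" for c
      unfolding below_def at_most_def by simp
    then have "dp_cost T x p (below 0 \<beta>) (below 1 \<beta>) \<le>
        dp_cost T x p (below 0 v) (below 1 v) + (\<Sum>t\<in>{t. t < T \<and> q t = v}. \<bar>p t - q t\<bar>)"
      using dp_cost_level_step[OF t0(1,2)] by simp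
    also have "\<dots> \<le> (\<Sum>t\<in>{t. t < T \<and> q t < \<beta>}. \<bar>p t - q t\<bar>)"
      using IH unfolding split by (subst sum.union_disjoint) auto
    finally show ?thesis .
  qed
qed

lemma dp_cost_le_sum_dist: "dp_cost T x p n0 n1 \<le> (\<Sum>t<T. \<bar>p t - q t\<bar>)"
proof -
  have q_le: "q t < 2" if "t < T" for t
    using q_calibrated that by (fastforce simp: calib_set_def)
  then have "{t. t < T \<and> x t = c \<and> q t < 2} = {t. t < T \<and> x t = c}" for c
    by auto
  then have "below c 2 = card {t. t < T \<and> x t = c}" for c
    unfolding below_def by simp
  moreover have "{t. t < T \<and> q t < 2} = {..<T}" using q_le by auto
  ultimately show ?thesis using dp_cost_below[of 2] by simp
qed

end

context binary_forecast
begin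

theorem CalDist_eq_dp_cost: "CalDist T x p = dp_cost T x p n0 n1"
  unfolding CalDist_def
proof (rule cInf_eq_minimum)
  show "dp_cost T x p n0 n1 \<in> {\<Sum>t<T. \<bar>p t - q t\<bar> |q. q \<in> calib_set T x}"
    using exists_calibrated_with_dp_cost by force
next
  fix c assume "c \<in> {\<Sum>t<T. \<bar>p t - q t\<bar> |q. q \<in> calib_set T x}"
  then obtain q where q: "q \<in> calib_set T x" "c = (\<Sum>t<T. \<bar>p t - q t\<bar>)" by blast
  obtain q' where q': "q' \<in> calib_set T x" "class_monotone q'"
    "(\<Sum>t<T. \<bar>p t - q' t\<bar>) \<le> (\<Sum>t<T. \<bar>p t - q t\<bar>)"
    using exists_class_monotone_rearrangement[OF q(1)] by blast
  interpret monotone_calibrated T x p q'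
    using q'(1,2) by unfold_locales
  show "dp_cost T x p n0 n1 \<le> c"
    using dp_cost_le_sum_dist q'(3) q(2) by linarith
qed

end

section \<open>Timed total correctness\<close>

definition hoare_timed :: "(state \<Rightarrow> bool) \<Rightarrow> com \<Rightarrow> (state \<Rightarrow> bool) \<Rightarrow> nat \<Rightarrow> bool" where
  "hoare_timed P c Q B \<longleftrightarrow> (\<forall>s. P s \<longrightarrow> (\<exists>n s'. exec c s n s' \<and> n \<le> B \<and> Q s'))"

lemma hoare_timed_Skip: "hoare_timed Q Skip Q 1"
  unfolding hoare_timed_def by (blast intro: exec.intros(1))

lemma hoare_timed_NStore: "hoare_timed (\<lambda>s. Q ((fst s)(neval a s := neval e s), snd s)) (NStore a e) Q 1"
  unfolding hoare_timed_def by (blast intro: exec.intros(2))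

lemma hoare_timed_RStore: "hoare_timed (\<lambda>s. Q (fst s, (snd s)(neval a s := reval e s))) (RStore a e) Q 1"
  unfolding hoare_timed_def by (blast intro: exec.intros(3))

lemma hoare_timed_Seq:
  "hoare_timed P c1 R B1 \<Longrightarrow> hoare_timed R c2 Q B2 \<Longrightarrow> hoare_timed P (Seq c1 c2) Q (B1 + B2)"
  unfolding hoare_timed_def by (meson add_mono exec.intros(4))

lemma hoare_timed_If:
  assumes "hoare_timed P1 c1 Q B1" "hoare_timed P2 c2 Q B2"
  shows "hoare_timed (\<lambda>s. (beval b s \<longrightarrow> P1 s) \<and> (\<not> beval b s \<longrightarrow> P2 s)) (If b c1 c2) Q (Suc (max B1 B2))"
  unfolding hoare_timed_def
proof (intro allI impI)
  fix s assume pre: "(beval b s \<longrightarrow> P1 s) \<and> (\<not> beval b s \<longrightarrow> P2 s)"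
  show "\<exists>n s'. exec (If b c1 c2) s n s' \<and> n \<le> Suc (max B1 B2) \<and> Q s'"
  proof (cases "beval b s")
    case True
    then obtain n s' where "exec c1 s n s'" "n \<le> B1" "Q s'" using assms(1) pre unfolding hoare_timed_def by blast
    then show ?thesis using True by (intro exI[of _ "Suc n"] exI[of _ s']) (auto intro: exec.intros)
  next
    case False
    then obtain n s' where "exec c2 s n s'" "n \<le> B2" "Q s'" using assms(2) pre unfolding hoare_timed_def by blast
    then show ?thesis using False by (intro exI[of _ "Suc n"] exI[of _ s']) (auto intro: exec.intros)
  qed
qed

text \<open>Backward reasoning through a straight-line program: the second premise of
  \<open>hoare_timed_Seq\<close> is handled first, so that each precondition is computed from the postcondition.\<close>

lemmas hoare_timed_wp =
  hoare_timed_Seq[rotated] hoare_timed_If hoare_timed_NStore hoare_timed_RStore hoare_timed_Skip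

lemma hoare_timed_conseq:
  "hoare_timed P' c Q B' \<Longrightarrow> (\<And>s. P s \<Longrightarrow> P' s) \<Longrightarrow> B' \<le> B \<Longrightarrow> hoare_timed P c Q B"
  unfolding hoare_timed_def by (meson order_trans)

lemma hoare_timed_post: "hoare_timed P c Q' B \<Longrightarrow> (\<And>s. Q' s \<Longrightarrow> Q s) \<Longrightarrow> hoare_timed P c Q B"
  unfolding hoare_timed_def by blast

lemma hoare_timed_If_cases:
  "hoare_timed (\<lambda>s. P s \<and> beval b s) c1 Q B \<Longrightarrow> hoare_timed (\<lambda>s. P s \<and> \<not> beval b s) c2 Q B \<Longrightarrow>
    hoare_timed P (If b c1 c2) Q (Suc B)"
  by (rule hoare_timed_conseq[OF hoare_timed_If]) auto

lemma hoare_timed_exists: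
  "(\<And>u. hoare_timed (P u) c (Q u) B) \<Longrightarrow> hoare_timed (\<lambda>s. \<exists>u. P u s) c (\<lambda>s. \<exists>u. Q u s) B"
  unfolding hoare_timed_def by blast

lemma hoare_timed_frame: "hoare_timed P c Q B \<Longrightarrow> hoare_timed (\<lambda>s. P s \<and> R) c (\<lambda>s. Q s \<and> R) B"
  unfolding hoare_timed_def by blast

lemma hoare_timed_call:
  "hoare_timed P c Q' B \<Longrightarrow> hoare_timed (\<lambda>s. P s \<and> (\<forall>s'. Q' s' \<longrightarrow> Q s')) c Q B"
  unfolding hoare_timed_def by blast

lemma hoare_timed_call_param:
  "(\<And>u. C u \<Longrightarrow> hoare_timed (P u) c (Q' u) B) \<Longrightarrow>
    hoare_timed (\<lambda>s. \<exists>u. C u \<and> P u s \<and> (\<forall>s'. Q' u s' \<longrightarrow> Q s')) c Q B"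
  unfolding hoare_timed_def by blast

lemma hoare_timed_While_from:
  assumes guard: "\<And>k s. k < N \<Longrightarrow> I k s \<Longrightarrow> beval b s"
    and exit: "\<And>s. I N s \<Longrightarrow> \<not> beval b s"
    and body: "\<And>k. k < N \<Longrightarrow> hoare_timed (I k) c (I (Suc k)) B"
  shows "k \<le> N \<Longrightarrow> hoare_timed (I k) (While b c) (I N) ((N - k) * (B + 1) + 1)"
proof (induction k rule: inc_induct)
  case base
  show ?case unfolding hoare_timed_def
  proof (intro allI impI)
    fix s assume "I N s"
    then have "exec (While b c) s 1 s" using exit by (blast intro: exec.intros(7))
    then show "\<exists>n s'. exec (While b c) s n s' \<and> n \<le> (N - N) * (B + 1) + 1 \<and> I N s'"
      using \<open>I N s\<close> by (intro exI[of _ 1] exI[of _ s]) simp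
  qed
next
  case (step k)
  show ?case unfolding hoare_timed_def
  proof (intro allI impI)
    fix s assume "I k s"
    obtain n1 s1 where 1: "exec c s n1 s1" "n1 \<le> B" "I (Suc k) s1"
      using body[OF step.hyps(2)] \<open>I k s\<close> unfolding hoare_timed_def by blast
    obtain n2 s2 where 2: "exec (While b c) s1 n2 s2" "n2 \<le> (N - Suc k) * (B + 1) + 1" "I N s2"
      using step.IH 1(3) unfolding hoare_timed_def by blast
    have "exec (While b c) s (Suc (n1 + n2)) s2"
      using guard[OF step.hyps(2) \<open>I k s\<close>] 1(1) 2(1) by (rule exec.intros(8))
    moreover have "N - k = Suc (N - Suc k)" using step.hyps(2) by simp
    then have "Suc (n1 + n2) \<le> (N - k) * (B + 1) + 1" using 1(2) 2(2) by simp
    ultimately show "\<exists>n s'. exec (While b c) s n s' \<and> n \<le> (N - k) * (B + 1) + 1 \<and> I N s'"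
      using 2(3) by blast
  qed
qed

lemma hoare_timed_While:
  assumes "\<And>k s. k < N \<Longrightarrow> I k s \<Longrightarrow> beval b s" "\<And>s. I N s \<Longrightarrow> \<not> beval b s"
    "\<And>k. k < N \<Longrightarrow> hoare_timed (I k) c (I (Suc k)) B" "N \<le> M" "M * (B + 1) + 1 \<le> Bw"
  shows "hoare_timed (I 0) (While b c) (I N) Bw"
proof (rule hoare_timed_conseq[OF hoare_timed_While_from[of N I b c B 0, OF assms(1-3)]])
  have "N * (B + 1) \<le> M * (B + 1)" using assms(4) by (rule mult_le_mono1)
  then show "(N - 0) * (B + 1) + 1 \<le> Bw" using assms(5) by simp
qed simp_all

section \<open>A real-RAM program computing the dynamic program\<close>

text \<open>Natural registers: 0 holds \<open>T\<close>; the rank of round \<open>t\<close> (index in 12) is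
  counted in 3 while 2 runs over all rounds, and stored at \<open>20 + t\<close>; 12 also indexes the counting and
  cost passes; 10 receives \<open>n0\<close>, so that \<open>n1 = T - n0\<close>; the current table cell \<open>(i, j)\<close> is in 4, 5
  (with \<open>i * (T + 1)\<close> in 8), the candidate predecessor \<open>(a, b)\<close> in 6, 7 (with \<open>a * (T + 1)\<close> in 9),
  and 11 flags that some candidate has been seen. Real registers: \<open>2T + 1\<close>, \<open>2T + 2\<close>, \<open>2T + 3\<close>
  hold the block value, the cost of the current candidate and the running minimum, and
  \<open>dp_cost T x p a b\<close> is stored at \<open>2T + 4 + a * (T + 1) + b\<close>.\<close>

abbreviation reg :: "nat \<Rightarrow> nexp" where "reg k \<equiv> NLoad (NConst k)"
abbreviation reg_T :: nexp where "reg_T \<equiv> reg 0"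
abbreviation x_at :: "nexp \<Rightarrow> rexp" where "x_at e \<equiv> RLoad (NAdd (NConst 1) e)"
abbreviation p_at :: "nexp \<Rightarrow> rexp" where "p_at e \<equiv> RLoad (NAdd (NAdd (NConst 1) reg_T) e)"
abbreviation rank_addr :: "nexp \<Rightarrow> nexp" where "rank_addr e \<equiv> NAdd (NConst 20) e"
abbreviation BOr :: "bexp \<Rightarrow> bexp \<Rightarrow> bexp" where "BOr a b \<equiv> BNot (BAnd (BNot a) (BNot b))"
abbreviation REq :: "rexp \<Rightarrow> rexp \<Rightarrow> bexp" where "REq a b \<equiv> BAnd (BNot (RLess a b)) (BNot (RLess b a))"
abbreviation NEq :: "nexp \<Rightarrow> nexp \<Rightarrow> bexp" where "NEq a b \<equiv> BAnd (BNot (NLess a b)) (BNot (NLess b a))"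
abbreviation NLe :: "nexp \<Rightarrow> nexp \<Rightarrow> bexp" where "NLe a b \<equiv> BNot (NLess b a)"
abbreviation incr :: "nat \<Rightarrow> com" where "incr k \<equiv> NStore (NConst k) (NAdd (reg k) (NConst 1))"
abbreviation set_reg :: "nat \<Rightarrow> nat \<Rightarrow> com" where "set_reg k v \<equiv> NStore (NConst k) (NConst v)"

definition val_addr :: nexp where "val_addr = NAdd (NAdd reg_T reg_T) (NConst 1)"
definition sum_addr :: nexp where "sum_addr = NAdd (NAdd reg_T reg_T) (NConst 2)"
definition min_addr :: nexp where "min_addr = NAdd (NAdd reg_T reg_T) (NConst 3)"
definition table_addr :: "nexp \<Rightarrow> nexp" where "table_addr e = NAdd (NAdd (NAdd reg_T reg_T) (NConst 4)) e"

definition rank_cond :: bexp where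
  "rank_cond = BAnd (REq (x_at (reg 2)) (x_at (reg 12)))
     (BOr (RLess (p_at (reg 2)) (p_at (reg 12)))
        (BAnd (REq (p_at (reg 2)) (p_at (reg 12))) (NLess (reg 2) (reg 12))))"

definition rank_step :: com where
  "rank_step = Seq (If rank_cond (incr 3) Skip) (incr 2)"

definition rank_loop :: com where
  "rank_loop = While (NLess (reg 2) reg_T) rank_step"

definition rank_round :: com where
  "rank_round = Seq (set_reg 3 0) (Seq (set_reg 2 0)
     (Seq rank_loop (Seq (NStore (rank_addr (reg 12)) (reg 3)) (incr 12))))"

definition compute_ranks :: com where
  "compute_ranks = Seq (set_reg 12 0) (While (NLess (reg 12) reg_T) rank_round)"

definition count_step :: com where
  "count_step = Seq (If (RLess (x_at (reg 12)) (RNat (NConst 1))) (incr 10) Skip) (incr 12)"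

definition count_zeros :: com where
  "count_zeros = Seq (set_reg 10 0) (Seq (set_reg 12 0) (While (NLess (reg 12) reg_T) count_step))"

definition in_block_test :: bexp where
  "in_block_test = BOr
     (BAnd (RLess (x_at (reg 12)) (RNat (NConst 1)))
        (BAnd (NLe (reg 6) (NLoad (rank_addr (reg 12)))) (NLess (NLoad (rank_addr (reg 12))) (reg 4))))
     (BAnd (BNot (RLess (x_at (reg 12)) (RNat (NConst 1))))
        (BAnd (NLe (reg 7) (NLoad (rank_addr (reg 12)))) (NLess (NLoad (rank_addr (reg 12))) (reg 5))))"

definition block_cost_step :: com where
  "block_cost_step = Seq
     (If in_block_test
        (If (RLess (p_at (reg 12)) (RLoad val_addr))
           (RStore sum_addr (RAdd (RLoad sum_addr) (RSub (RLoad val_addr) (p_at (reg 12)))))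
           (RStore sum_addr (RAdd (RLoad sum_addr) (RSub (p_at (reg 12)) (RLoad val_addr)))))
        Skip)
     (incr 12)"

definition block_cost_loop :: com where
  "block_cost_loop = Seq (RStore sum_addr (RLoad (table_addr (NAdd (reg 9) (reg 7)))))
     (Seq (set_reg 12 0) (While (NLess (reg 12) reg_T) block_cost_step))"

definition set_block_value :: com where
  "set_block_value = RStore val_addr
     (RDiv (RNat (NSub (reg 5) (reg 7))) (RNat (NAdd (NSub (reg 4) (reg 6)) (NSub (reg 5) (reg 7)))))"

definition update_min :: com where
  "update_min = If (BOr (NEq (reg 11) (NConst 0)) (RLess (RLoad sum_addr) (RLoad min_addr)))
     (Seq (RStore min_addr (RLoad sum_addr)) (set_reg 11 1)) Skip"

definition at_cell :: bexp where
  "at_cell = BAnd (NEq (reg 6) (reg 4)) (NEq (reg 7) (reg 5))"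

definition b_step :: com where
  "b_step = Seq (If at_cell Skip (Seq set_block_value (Seq block_cost_loop update_min))) (incr 7)"

definition b_loop :: com where
  "b_loop = While (NLess (reg 7) (NAdd (reg 5) (NConst 1))) b_step"

definition a_step :: com where
  "a_step = Seq (set_reg 7 0)
     (Seq b_loop (Seq (incr 6) (NStore (NConst 9) (NAdd (NAdd (reg 9) reg_T) (NConst 1)))))"

definition a_loop :: com where
  "a_loop = While (NLess (reg 6) (NAdd (reg 4) (NConst 1))) a_step"

definition min_over_preds :: com where
  "min_over_preds = Seq (Seq (set_reg 11 0) (Seq (set_reg 6 0) (set_reg 9 0))) a_loop"

definition at_origin :: bexp where
  "at_origin = BAnd (NEq (reg 4) (NConst 0)) (NEq (reg 5) (NConst 0))"

definition at_final_cell :: bexp where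
  "at_final_cell = BAnd (NEq (reg 4) (reg 10)) (NEq (reg 5) (NSub reg_T (reg 10)))"

definition fill_cell :: com where
  "fill_cell = If at_origin (RStore (table_addr (NAdd (reg 8) (reg 5))) (RNat (NConst 0)))
     (Seq min_over_preds (RStore (table_addr (NAdd (reg 8) (reg 5))) (RLoad min_addr)))"

definition emit_and_advance :: com where
  "emit_and_advance = Seq
     (If at_final_cell (RStore (NConst 0) (RLoad (table_addr (NAdd (reg 8) (reg 5))))) Skip) (incr 5)"

definition cell_step :: com where
  "cell_step = Seq fill_cell emit_and_advance"

definition j_loop :: com where
  "j_loop = While (NLess (reg 5) (NAdd reg_T (NConst 1))) cell_step"

definition i_step :: com where
  "i_step = Seq j_loop
     (Seq (incr 4) (Seq (NStore (NConst 8) (NAdd (NAdd (reg 8) reg_T) (NConst 1))) (set_reg 5 0)))"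

definition i_loop :: com where
  "i_loop = While (NLess (reg 4) (NAdd reg_T (NConst 1))) i_step"

definition fill_table :: com where
  "fill_table = Seq (Seq (set_reg 4 0) (Seq (set_reg 8 0) (set_reg 5 0))) i_loop"

definition calib_dist_prog :: com where
  "calib_dist_prog = Seq compute_ranks (Seq count_zeros fill_table)"

section \<open>Correctness and running time of the program\<close>

lemma card_less_Suc_filter:
  "card {v. v < Suc k \<and> P v} = card {v. v < k \<and> P v} + (if P k then 1 else 0)"
proof (cases "P k")
  case True
  then have "{v. v < Suc k \<and> P v} = insert k {v. v < k \<and> P v}" by (auto simp: less_Suc_eq)
  then show ?thesis using True by simp
next
  case False
  then have "{v. v < Suc k \<and> P v} = {v. v < k \<and> P v}" by (auto simp: less_Suc_eq)
  then show ?thesis using False by simp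
qed

lemma time_bound_poly:
  fixes T :: nat
  assumes "1 \<le> T"
  shows "(T * (T * 4 + 6) + 2) + ((T * 4 + 3) +
     ((T + 1) * ((T + 1) * ((T + 1) * ((T + 1) * (T * 5 + 10) + 5) + 10) + 5) + 4)) \<le> 2000 * T ^ 5"
proof -
  have p: "T ^ a \<le> T ^ 5" if "a \<le> 5" for a using assms that by (simp add: power_increasing)
  have e: "(T * (T * 4 + 6) + 2) + ((T * 4 + 3) +
     ((T + 1) * ((T + 1) * ((T + 1) * ((T + 1) * (T * 5 + 10) + 5) + 10) + 5) + 4)) =
     5 * (T * T * T * T * T) + 30 * (T * T * T * T) + 75 * (T * T * T) + 109 * (T * T) + 95 * T + 39"
    by (simp add: algebra_simps)
  have q: "T ^ 5 = T * T * T * T * T" "T ^ 4 = T * T * T * T" "T ^ 3 = T * T * T" "T ^ 2 = T * T"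
    by (simp_all add: eval_nat_numeral)
  have "T ^ 4 \<le> T ^ 5" "T ^ 3 \<le> T ^ 5" "T ^ 2 \<le> T ^ 5" using p by auto
  moreover have "T \<le> T ^ 5" "1 \<le> T ^ 5" using p[of 1] p[of 0] by simp_all
  ultimately show ?thesis unfolding e q by linarith
qed

context binary_forecast
begin

definition input_ok :: "state \<Rightarrow> bool" where
  "input_ok s \<longleftrightarrow> fst s 0 = T \<and> (\<forall>u<T. snd s (Suc u) = x u \<and> snd s (Suc (T + u)) = p u)"

lemma input_ok_T: "input_ok s \<Longrightarrow> fst s 0 = T" by (simp add: input_ok_def)
lemma input_ok_x: "input_ok s \<Longrightarrow> u < T \<Longrightarrow> snd s (Suc u) = x u" by (simp add: input_ok_def)
lemma input_ok_p: "input_ok s \<Longrightarrow> u < T \<Longrightarrow> snd s (Suc (T + u)) = p u" by (simp add: input_ok_def)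
lemma input_ok_nupd: "k \<noteq> 0 \<Longrightarrow> input_ok (f(k := v), g) = input_ok (f, g)" by (simp add: input_ok_def)
lemma input_ok_rupd:
  assumes h: "2 * T < k \<or> k = 0"
  shows "input_ok (f, g(k := v)) = input_ok (f, g)"
proof -
  have e: "(g(k := v)) (Suc u) = g (Suc u) \<and> (g(k := v)) (Suc (T + u)) = g (Suc (T + u))" if "u < T" for u
  proof -
    have a1: "Suc u \<noteq> k" using h that by auto
    have a2: "Suc (T + u) \<noteq> k" using h that by auto
    show ?thesis using a1 a2 by simp
  qed
  show ?thesis unfolding input_ok_def fst_conv snd_conv using e by simp
qed

lemma rank_cond_iff: "input_ok s \<Longrightarrow> fst s 12 < T \<Longrightarrow> fst s 2 < T \<Longrightarrow>
  beval rank_cond s \<longleftrightarrow> x (fst s 2) = x (fst s 12) \<and> forecast_less p (fst s 2) (fst s 12)"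
  unfolding rank_cond_def forecast_less_def by (auto simp: input_ok_x input_ok_p input_ok_T)

definition rank_loop_inv :: "nat \<Rightarrow> nat \<Rightarrow> state \<Rightarrow> bool" where
  "rank_loop_inv t k s \<longleftrightarrow> input_ok s \<and> fst s 12 = t \<and> (\<forall>u<t. fst s (20 + u) = rank u) \<and> fst s 2 = k \<and>
     fst s 3 = card {v. v < k \<and> x v = x t \<and> forecast_less p v t}"

lemma rank_step_correct: "t < T \<Longrightarrow> k < T \<Longrightarrow> hoare_timed (rank_loop_inv t k) rank_step (rank_loop_inv t (Suc k)) 3"
  unfolding rank_step_def
  apply (rule hoare_timed_conseq)
    apply (rule hoare_timed_wp)+
   apply (auto simp: rank_loop_inv_def input_ok_nupd rank_cond_iff card_less_Suc_filter)
  done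

lemma rank_loop_correct: "t < T \<Longrightarrow> hoare_timed (rank_loop_inv t 0) rank_loop (rank_loop_inv t T) (T * 4 + 1)"
  unfolding rank_loop_def
  apply (rule hoare_timed_While[where M=T and B=3 and I="rank_loop_inv t"])
  subgoal by (auto simp: rank_loop_inv_def input_ok_T)
  subgoal by (auto simp: rank_loop_inv_def input_ok_T)
  subgoal by (rule rank_step_correct) auto
  by auto

lemma rank_loop_call:
  "hoare_timed (\<lambda>s. \<exists>t. t < T \<and> rank_loop_inv t 0 s \<and> (\<forall>s'. rank_loop_inv t T s' \<longrightarrow> Q s'))
     rank_loop Q (T * 4 + 1)"
  by (rule hoare_timed_call_param[where C="\<lambda>t. t < T"], rule rank_loop_correct)

definition ranks_inv :: "nat \<Rightarrow> state \<Rightarrow> bool" where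
  "ranks_inv k s \<longleftrightarrow> input_ok s \<and> fst s 12 = k \<and> (\<forall>u<k. fst s (20 + u) = rank u)"

lemma rank_round_correct: "k < T \<Longrightarrow> hoare_timed (ranks_inv k) rank_round (ranks_inv (Suc k)) (T * 4 + 5)"
  unfolding rank_round_def
  apply (rule hoare_timed_conseq)
    apply (rule hoare_timed_wp rank_loop_call)+
   apply (auto simp: ranks_inv_def rank_loop_inv_def input_ok_nupd less_Suc_eq class_rank_def)
  done

lemma compute_ranks_correct: "hoare_timed input_ok compute_ranks (ranks_inv T) (T * (T * 4 + 6) + 2)"
proof -
  have loop: "hoare_timed (ranks_inv 0) (While (NLess (reg 12) reg_T) rank_round) (ranks_inv T)
      (T * (T * 4 + 6) + 1)"
    apply (rule hoare_timed_While[where M=T and B="T * 4 + 5" and I="ranks_inv"])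
    subgoal by (auto simp: ranks_inv_def input_ok_T)
    subgoal by (auto simp: ranks_inv_def input_ok_T)
    subgoal by (rule rank_round_correct) auto
    by auto
  show ?thesis unfolding compute_ranks_def
    apply (rule hoare_timed_conseq)
      apply (rule hoare_timed_wp hoare_timed_call[OF loop])+
    by (auto simp: ranks_inv_def input_ok_nupd)
qed

definition ranks_stored :: "state \<Rightarrow> bool" where
  "ranks_stored s \<longleftrightarrow> (\<forall>u<T. fst s (20 + u) = rank u)"

definition count_inv :: "nat \<Rightarrow> state \<Rightarrow> bool" where
  "count_inv k s \<longleftrightarrow> input_ok s \<and> ranks_stored s \<and> fst s 12 = k \<and> fst s 10 = card {v. v < k \<and> x v = 0}"

lemma x_less_1_iff: "t < T \<Longrightarrow> x t < 1 \<longleftrightarrow> x t = 0"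
  using x_01[of t] by auto

lemma count_step_correct: "k < T \<Longrightarrow> hoare_timed (count_inv k) count_step (count_inv (Suc k)) 3"
  unfolding count_step_def
  apply (rule hoare_timed_conseq)
    apply (rule hoare_timed_wp)+
   apply (auto simp: count_inv_def ranks_stored_def input_ok_nupd input_ok_x x_less_1_iff card_less_Suc_filter)
  done

lemma count_zeros_correct:
  "hoare_timed (ranks_inv T) count_zeros (\<lambda>s. input_ok s \<and> ranks_stored s \<and> fst s 10 = n0) (T * 4 + 3)"
proof -
  have loop: "hoare_timed (count_inv 0) (While (NLess (reg 12) reg_T) count_step) (count_inv T) (T * 4 + 1)"
    apply (rule hoare_timed_While[where M=T and B="3" and I="count_inv"])
    subgoal by (auto simp: count_inv_def input_ok_T)
    subgoal by (auto simp: count_inv_def input_ok_T)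
    subgoal by (rule count_step_correct) auto
    by auto
  show ?thesis unfolding count_zeros_def
    apply (rule hoare_timed_conseq)
      apply (rule hoare_timed_wp hoare_timed_call[OF loop])+
    by (auto simp: ranks_inv_def count_inv_def ranks_stored_def input_ok_nupd)
qed

definition val_reg :: nat where "val_reg = T + T + 1"
definition sum_reg :: nat where "sum_reg = T + T + 2"
definition min_reg :: nat where "min_reg = T + T + 3"
definition table_base :: nat where "table_base = T + T + 4"
definition row_len :: nat where "row_len = T + 1"

lemma addr_neq [simp]:
  "val_reg \<noteq> sum_reg" "sum_reg \<noteq> val_reg" "val_reg \<noteq> min_reg" "min_reg \<noteq> val_reg"
  "sum_reg \<noteq> min_reg" "min_reg \<noteq> sum_reg"
  "val_reg \<noteq> 0" "sum_reg \<noteq> 0" "min_reg \<noteq> 0"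
  "table_base + n \<noteq> val_reg" "table_base + n \<noteq> sum_reg" "table_base + n \<noteq> min_reg" "table_base + n \<noteq> 0"
  "val_reg \<noteq> table_base + n" "sum_reg \<noteq> table_base + n" "min_reg \<noteq> table_base + n" "0 \<noteq> table_base + n"
  by (auto simp: val_reg_def sum_reg_def min_reg_def table_base_def)

lemma neval_addr:
  "input_ok s \<Longrightarrow> neval val_addr s = val_reg" "input_ok s \<Longrightarrow> neval sum_addr s = sum_reg"
  "input_ok s \<Longrightarrow> neval min_addr s = min_reg"
  "input_ok s \<Longrightarrow> neval (table_addr e) s = table_base + neval e s"
  by (auto simp: val_addr_def sum_addr_def min_addr_def table_addr_def val_reg_def sum_reg_def
      min_reg_def table_base_def input_ok_T)

lemma input_ok_scratch:
  "input_ok (f, g(val_reg := v)) = input_ok (f, g)" "input_ok (f, g(sum_reg := v)) = input_ok (f, g)"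
  "input_ok (f, g(min_reg := v)) = input_ok (f, g)"
  by (rule input_ok_rupd, simp add: val_reg_def sum_reg_def min_reg_def)+

definition table_ok :: "nat \<Rightarrow> nat \<Rightarrow> state \<Rightarrow> bool" where
  "table_ok i j s \<longleftrightarrow> (\<forall>a b. b \<le> T \<longrightarrow> (a < i \<or> (a = i \<and> b < j)) \<longrightarrow>
     snd s (table_base + (a * row_len + b)) = dp_cost T x p a b)"

definition output_ok :: "nat \<Rightarrow> nat \<Rightarrow> state \<Rightarrow> bool" where
  "output_ok i j s \<longleftrightarrow> ((n0 < i \<or> (n0 = i \<and> n1 < j)) \<longrightarrow> snd s 0 = dp_cost T x p n0 n1)"

definition cell_inv :: "nat \<Rightarrow> nat \<Rightarrow> state \<Rightarrow> bool" where
  "cell_inv i j s \<longleftrightarrow> input_ok s \<and> ranks_stored s \<and> fst s 10 = n0 \<and> fst s 4 = i \<and> fst s 5 = j \<and> fst s 8 = i * row_len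
      \<and> table_ok i j s \<and> output_ok i j s"

lemma cell_inv_nupd: "k \<noteq> 0 \<Longrightarrow> k \<noteq> 4 \<Longrightarrow> k \<noteq> 5 \<Longrightarrow> k \<noteq> 8 \<Longrightarrow> k \<noteq> 10 \<Longrightarrow> k < 20 \<Longrightarrow>
  cell_inv i j (f(k := v), g) = cell_inv i j (f, g)"
  by (simp add: cell_inv_def input_ok_nupd ranks_stored_def table_ok_def output_ok_def)

lemma cell_inv_scratch:
  "cell_inv i j (f, g(val_reg := v)) = cell_inv i j (f, g)"
  "cell_inv i j (f, g(sum_reg := v)) = cell_inv i j (f, g)"
  "cell_inv i j (f, g(min_reg := v)) = cell_inv i j (f, g)"
  by (simp_all add: cell_inv_def input_ok_scratch ranks_stored_def table_ok_def output_ok_def)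

lemma cell_inv_input_ok: "cell_inv i j s \<Longrightarrow> input_ok s" by (simp add: cell_inv_def)
lemma cell_inv_regs:
  "cell_inv i j s \<Longrightarrow> fst s 0 = T \<and> fst s 4 = i \<and> fst s 5 = j \<and> fst s 10 = n0 \<and> fst s 8 = i * row_len"
  by (simp add: cell_inv_def input_ok_T)
lemma cell_inv_ranks_stored: "cell_inv i j s \<Longrightarrow> ranks_stored s" by (simp add: cell_inv_def)

lemma in_block_test_iff: "input_ok s \<Longrightarrow> ranks_stored s \<Longrightarrow> fst s 12 < T \<Longrightarrow>
  beval in_block_test s \<longleftrightarrow> in_block T x p (fst s 6) (fst s 7) (fst s 4) (fst s 5) (fst s 12)"
  unfolding in_block_test_def in_block_def ranks_stored_def by (auto simp: input_ok_x x_less_1_iff)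

definition block_inv :: "nat \<Rightarrow> nat \<Rightarrow> nat \<Rightarrow> nat \<Rightarrow> state \<Rightarrow> bool" where
  "block_inv i j a b s \<longleftrightarrow> cell_inv i j s \<and> fst s 6 = a \<and> fst s 7 = b \<and> fst s 9 = a * row_len \<and>
     a \<le> i \<and> b \<le> j \<and> j \<le> T \<and> (a, b) \<noteq> (i, j) \<and> snd s val_reg = block_value a b i j"

definition block_cost_inv :: "nat \<Rightarrow> nat \<Rightarrow> nat \<Rightarrow> nat \<Rightarrow> nat \<Rightarrow> real \<Rightarrow> nat \<Rightarrow> state \<Rightarrow> bool" where
  "block_cost_inv i j a b fl m k s \<longleftrightarrow> block_inv i j a b s \<and> fst s 11 = fl \<and> snd s min_reg = m \<and> fst s 12 = k \<and>
     snd s sum_reg = dp_cost T x p a b +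
       (\<Sum>u<k. if in_block T x p a b i j u then \<bar>p u - block_value a b i j\<bar> else 0)"

lemma block_cost_step_correct: "k < T \<Longrightarrow>
    hoare_timed (block_cost_inv i j a b fl m k) block_cost_step (block_cost_inv i j a b fl m (Suc k)) 4"
  unfolding block_cost_step_def
  apply (rule hoare_timed_conseq)
    apply (rule hoare_timed_wp)+
  subgoal for s
    using cell_inv_input_ok[of i j s] cell_inv_ranks_stored[of i j s] cell_inv_regs[of i j s]
    by (auto simp: block_cost_inv_def block_inv_def cell_inv_nupd cell_inv_scratch in_block_test_iff
        neval_addr input_ok_p abs_if)
  by simp

lemma table_ok_read: "table_ok i j s \<Longrightarrow> b \<le> T \<Longrightarrow> a \<le> i \<Longrightarrow> b \<le> j \<Longrightarrow> (a, b) \<noteq> (i, j) \<Longrightarrow>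
  snd s (table_base + (a * row_len + b)) = dp_cost T x p a b"
  unfolding table_ok_def by (metis le_neq_implies_less)

lemma cell_inv_table_ok: "cell_inv i j s \<Longrightarrow> table_ok i j s" by (simp add: cell_inv_def)

lemma block_cost_loop_correct:
  "hoare_timed (\<lambda>s. block_inv i j a b s \<and> fst s 11 = fl \<and> snd s min_reg = m) block_cost_loop
     (\<lambda>s. block_inv i j a b s \<and> fst s 11 = fl \<and> snd s min_reg = m \<and>
        snd s sum_reg = dp_cost T x p a b + block_cost T x p a b i j) (T * 5 + 3)"
proof -
  have loop: "hoare_timed (block_cost_inv i j a b fl m 0) (While (NLess (reg 12) reg_T) block_cost_step)
      (block_cost_inv i j a b fl m T) (T * 5 + 1)"
    apply (rule hoare_timed_While[where M=T and B=4 and I="block_cost_inv i j a b fl m"])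
    subgoal for k s using cell_inv_regs[of i j s] by (auto simp: block_cost_inv_def block_inv_def)
    subgoal for s using cell_inv_regs[of i j s] by (auto simp: block_cost_inv_def block_inv_def)
    subgoal by (rule block_cost_step_correct) auto
    by auto
  show ?thesis unfolding block_cost_loop_def
    apply (rule hoare_timed_conseq)
      apply (rule hoare_timed_wp hoare_timed_call[OF loop])+
    subgoal for s
      using cell_inv_input_ok[of i j s] cell_inv_regs[of i j s] cell_inv_table_ok[of i j s]
        table_ok_read[of i j s b a]
      by (auto simp: block_cost_inv_def block_inv_def cell_inv_nupd cell_inv_scratch neval_addr block_cost_def)
    by simp
qed

definition scanned :: "nat \<Rightarrow> nat \<Rightarrow> nat \<Rightarrow> (nat \<times> nat) set" where
  "scanned j a k = {(a', b'). a' < a \<and> b' \<le> j \<or> a' = a \<and> b' < k}"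

definition candidates :: "nat \<Rightarrow> nat \<Rightarrow> (nat \<times> nat) set \<Rightarrow> real set" where
  "candidates i j P = (\<lambda>(a, b). dp_cost T x p a b + block_cost T x p a b i j) ` (P \<inter> dp_preds i j)"

definition min_inv :: "nat \<Rightarrow> nat \<Rightarrow> nat \<Rightarrow> nat \<Rightarrow> nat \<Rightarrow> real \<Rightarrow> bool" where
  "min_inv i j a k fl m \<longleftrightarrow> (candidates i j (scanned j a k) = {} \<and> fl = 0) \<or>
     (candidates i j (scanned j a k) \<noteq> {} \<and> fl = 1 \<and> m = Min (candidates i j (scanned j a k)))"

lemma finite_candidates: "finite (candidates i j P)"
  unfolding candidates_def using finite_dp_preds by auto

lemma candidates_skip:
  "(a, k) \<notin> dp_preds i j \<Longrightarrow> candidates i j (scanned j a (Suc k)) = candidates i j (scanned j a k)"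
proof -
  assume h: "(a, k) \<notin> dp_preds i j"
  have "scanned j a (Suc k) \<inter> dp_preds i j = scanned j a k \<inter> dp_preds i j"
    using h by (auto simp: scanned_def less_Suc_eq)
  then show ?thesis by (simp add: candidates_def)
qed

lemma candidates_insert: "(a, k) \<in> dp_preds i j \<Longrightarrow> candidates i j (scanned j a (Suc k)) =
   insert (dp_cost T x p a k + block_cost T x p a k i j) (candidates i j (scanned j a k))"
proof -
  assume h: "(a, k) \<in> dp_preds i j"
  have "scanned j a (Suc k) \<inter> dp_preds i j = insert (a, k) (scanned j a k \<inter> dp_preds i j)"
    using h by (auto simp: scanned_def less_Suc_eq)
  then show ?thesis by (simp add: candidates_def)
qed

lemma min_inv_skip: "(a, k) \<notin> dp_preds i j \<Longrightarrow> min_inv i j a k fl m \<Longrightarrow> min_inv i j a (Suc k) fl m"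
  unfolding min_inv_def by (simp add: candidates_skip)

lemma min_inv_new: "(a, k) \<in> dp_preds i j \<Longrightarrow> min_inv i j a k fl m \<Longrightarrow>
   fl = 0 \<or> dp_cost T x p a k + block_cost T x p a k i j < m \<Longrightarrow>
   min_inv i j a (Suc k) 1 (dp_cost T x p a k + block_cost T x p a k i j)"
proof -
  assume h: "(a, k) \<in> dp_preds i j" "min_inv i j a k fl m"
    "fl = 0 \<or> dp_cost T x p a k + block_cost T x p a k i j < m"
  let ?A = "candidates i j (scanned j a k)" and ?v = "dp_cost T x p a k + block_cost T x p a k i j"
  have fin: "finite ?A" by (rule finite_candidates)
  have "Min (insert ?v ?A) = ?v"
  proof (cases "?A = {}")
    case True then show ?thesis by simp
  next
    case False
    then have "fl = 1" "m = Min ?A" using h(2) unfolding min_inv_def by auto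
    then have "?v < Min ?A" using h(3) by simp
    then show ?thesis using Min_insert[OF fin False, of ?v] by simp
  qed
  then show ?thesis unfolding min_inv_def candidates_insert[OF h(1)] by simp
qed

lemma min_inv_keep: "(a, k) \<in> dp_preds i j \<Longrightarrow> min_inv i j a k fl m \<Longrightarrow>
   \<not> (fl = 0 \<or> dp_cost T x p a k + block_cost T x p a k i j < m) \<Longrightarrow> min_inv i j a (Suc k) fl m"
proof -
  assume h: "(a, k) \<in> dp_preds i j" "min_inv i j a k fl m"
    "\<not> (fl = 0 \<or> dp_cost T x p a k + block_cost T x p a k i j < m)"
  let ?A = "candidates i j (scanned j a k)" and ?v = "dp_cost T x p a k + block_cost T x p a k i j"
  have fin: "finite ?A" by (rule finite_candidates)
  have ne: "?A \<noteq> {}" and fl: "fl = 1" and m: "m = Min ?A" using h(2,3) unfolding min_inv_def by auto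
  have "Min (insert ?v ?A) = m" using Min_insert[OF fin ne, of ?v] h(3) m by simp
  then show ?thesis unfolding min_inv_def candidates_insert[OF h(1)] using fl by simp
qed

definition b_loop_inv :: "nat \<Rightarrow> nat \<Rightarrow> nat \<Rightarrow> nat \<Rightarrow> nat \<Rightarrow> state \<Rightarrow> bool" where
  "b_loop_inv i j a k k' s \<longleftrightarrow> cell_inv i j s \<and> fst s 6 = a \<and> fst s 9 = a * row_len \<and> fst s 7 = k \<and> a \<le> i \<and> j \<le> T \<and>
     min_inv i j a k' (fst s 11) (snd s min_reg)"

definition block_cost_pre :: "nat \<Rightarrow> nat \<Rightarrow> nat \<Rightarrow> nat \<Rightarrow> nat \<times> real \<Rightarrow> state \<Rightarrow> bool" where
  "block_cost_pre i j a k u s \<longleftrightarrow> block_inv i j a k s \<and> fst s 11 = fst u \<and> snd s min_reg = snd u \<and>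
     min_inv i j a k (fst u) (snd u)"

definition block_cost_post :: "nat \<Rightarrow> nat \<Rightarrow> nat \<Rightarrow> nat \<Rightarrow> nat \<times> real \<Rightarrow> state \<Rightarrow> bool" where
  "block_cost_post i j a k u s \<longleftrightarrow>
     block_cost_pre i j a k u s \<and> snd s sum_reg = dp_cost T x p a k + block_cost T x p a k i j"

lemma at_cell_iff: "beval at_cell s \<longleftrightarrow> fst s 6 = fst s 4 \<and> fst s 7 = fst s 5"
  unfolding at_cell_def by auto

lemma set_block_value_correct:
  "hoare_timed (\<lambda>s. b_loop_inv i j a k k s \<and> k \<le> j \<and> \<not> beval at_cell s) set_block_value
     (\<lambda>s. \<exists>u. block_cost_pre i j a k u s) 1"
  unfolding set_block_value_def
  apply (rule hoare_timed_conseq, rule hoare_timed_RStore)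
  subgoal for s
    using cell_inv_input_ok[of i j s] cell_inv_regs[of i j s]
    by (auto simp: b_loop_inv_def block_cost_pre_def block_inv_def at_cell_iff neval_addr
        cell_inv_scratch block_value_def)
  by simp

lemma block_cost_loop_framed:
  "hoare_timed (\<lambda>s. \<exists>u. block_cost_pre i j a k u s) block_cost_loop
     (\<lambda>s. \<exists>u. block_cost_post i j a k u s) (T * 5 + 3)"
proof (rule hoare_timed_exists)
  fix u :: "nat \<times> real"
  have "hoare_timed
      (\<lambda>s. (block_inv i j a k s \<and> fst s 11 = fst u \<and> snd s min_reg = snd u) \<and>
        min_inv i j a k (fst u) (snd u))
      block_cost_loop
      (\<lambda>s. (block_inv i j a k s \<and> fst s 11 = fst u \<and> snd s min_reg = snd u \<and>
          snd s sum_reg = dp_cost T x p a k + block_cost T x p a k i j) \<and>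
        min_inv i j a k (fst u) (snd u))
      (T * 5 + 3)"
    by (rule hoare_timed_frame[OF block_cost_loop_correct])
  then show "hoare_timed (block_cost_pre i j a k u) block_cost_loop (block_cost_post i j a k u) (T * 5 + 3)"
    unfolding block_cost_pre_def block_cost_post_def by (rule hoare_timed_conseq[OF hoare_timed_post]) auto
qed

lemma block_inv_dp_preds: "block_inv i j a k s \<Longrightarrow> (a, k) \<in> dp_preds i j"
  by (auto simp: block_inv_def dp_preds_def)

lemma update_min_correct:
  "hoare_timed (\<lambda>s. \<exists>u. block_cost_post i j a k u s) update_min (b_loop_inv i j a k (Suc k)) 3"
  unfolding update_min_def
  apply (rule hoare_timed_conseq)
    apply (rule hoare_timed_wp)+
  subgoal for s
    using cell_inv_input_ok[of i j s] cell_inv_regs[of i j s] block_inv_dp_preds[of i j a k s]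
      min_inv_new[of a k i j "fst s 11" "snd s min_reg"] min_inv_keep[of a k i j "fst s 11" "snd s min_reg"]
    by (auto simp: b_loop_inv_def block_cost_post_def block_cost_pre_def block_inv_def neval_addr
        cell_inv_scratch cell_inv_nupd)
  by simp

lemma b_step_correct: "k < Suc j \<Longrightarrow>
    hoare_timed (b_loop_inv i j a k k) b_step (b_loop_inv i j a (Suc k) (Suc k)) (T * 5 + 9)"
proof -
  assume kj: "k < Suc j"
  have br2: "hoare_timed (\<lambda>s. b_loop_inv i j a k k s \<and> \<not> beval at_cell s)
      (Seq set_block_value (Seq block_cost_loop update_min)) (b_loop_inv i j a k (Suc k)) (T * 5 + 7)"
    apply (rule hoare_timed_conseq[OF hoare_timed_Seq[OF set_block_value_correct[of i j a k]
          hoare_timed_Seq[OF block_cost_loop_framed update_min_correct]]])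
    using kj by auto
  have br1: "hoare_timed (\<lambda>s. b_loop_inv i j a k k s \<and> beval at_cell s) Skip
      (b_loop_inv i j a k (Suc k)) (T * 5 + 7)"
    apply (rule hoare_timed_conseq[OF hoare_timed_Skip])
    subgoal for s
      using cell_inv_regs[of i j s] min_inv_skip[of a k i j "fst s 11" "snd s min_reg"]
      by (auto simp: b_loop_inv_def at_cell_iff dp_preds_def)
    by simp
  have "hoare_timed (b_loop_inv i j a k k)
      (If at_cell Skip (Seq set_block_value (Seq block_cost_loop update_min)))
      (b_loop_inv i j a k (Suc k)) (Suc (T * 5 + 7))"
    by (rule hoare_timed_If_cases[OF br1 br2])
  moreover have "hoare_timed (b_loop_inv i j a k (Suc k)) (incr 7) (b_loop_inv i j a (Suc k) (Suc k)) 1"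
    apply (rule hoare_timed_conseq[OF hoare_timed_NStore])
    subgoal for s by (auto simp: b_loop_inv_def cell_inv_nupd)
    by simp
  ultimately show ?thesis unfolding b_step_def
    by (rule hoare_timed_conseq[OF hoare_timed_Seq]) auto
qed

lemma b_loop_correct: "j \<le> T \<Longrightarrow>
    hoare_timed (b_loop_inv i j a 0 0) b_loop (b_loop_inv i j a (Suc j) (Suc j)) ((T + 1) * (T * 5 + 10) + 1)"
  unfolding b_loop_def
  apply (rule hoare_timed_While[where M="T + 1" and B="T * 5 + 9" and I="\<lambda>k. b_loop_inv i j a k k"])
  subgoal for k s using cell_inv_regs[of i j s] by (auto simp: b_loop_inv_def)
  subgoal for s using cell_inv_regs[of i j s] by (auto simp: b_loop_inv_def)
  subgoal by (rule b_step_correct) auto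
  by simp_all

definition a_loop_inv :: "nat \<Rightarrow> nat \<Rightarrow> nat \<Rightarrow> state \<Rightarrow> bool" where
  "a_loop_inv i j k s \<longleftrightarrow> cell_inv i j s \<and> fst s 6 = k \<and> fst s 9 = k * row_len \<and> j \<le> T \<and>
     min_inv i j k 0 (fst s 11) (snd s min_reg)"

lemma scanned_next_row: "scanned j a (Suc j) = scanned j (Suc a) 0"
  by (auto simp: scanned_def)

lemma min_inv_next_row: "min_inv i j a (Suc j) fl m = min_inv i j (Suc a) 0 fl m"
  by (simp add: min_inv_def scanned_next_row)

lemma row_len_step: "Suc (k * row_len + T) = Suc k * row_len" "k * row_len + T + 1 = Suc k * row_len"
  by (simp_all add: row_len_def)

lemma a_step_correct: "j \<le> T \<Longrightarrow> k < Suc i \<Longrightarrow>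
    hoare_timed (a_loop_inv i j k) a_step (a_loop_inv i j (Suc k)) ((T + 1) * (T * 5 + 10) + 4)"
proof -
  assume jT: "j \<le> T" and ki: "k < Suc i"
  have s1: "hoare_timed (a_loop_inv i j k) (set_reg 7 0) (b_loop_inv i j k 0 0) 1"
    apply (rule hoare_timed_conseq[OF hoare_timed_NStore])
    subgoal for s using ki by (auto simp: a_loop_inv_def b_loop_inv_def cell_inv_nupd)
    by simp
  have s3: "hoare_timed (b_loop_inv i j k (Suc j) (Suc j))
      (Seq (incr 6) (NStore (NConst 9) (NAdd (NAdd (reg 9) reg_T) (NConst 1)))) (a_loop_inv i j (Suc k)) 2"
    apply (rule hoare_timed_conseq)
      apply (rule hoare_timed_wp)+
    subgoal for s using cell_inv_regs[of i j s]
      by (auto simp: a_loop_inv_def b_loop_inv_def cell_inv_nupd min_inv_next_row row_len_step)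
    by simp
  show ?thesis unfolding a_step_def
    by (rule hoare_timed_conseq[OF hoare_timed_Seq[OF s1 hoare_timed_Seq[OF b_loop_correct[OF jT] s3]]]) auto
qed

lemma a_loop_correct: "i \<le> T \<Longrightarrow> j \<le> T \<Longrightarrow>
    hoare_timed (a_loop_inv i j 0) a_loop (a_loop_inv i j (Suc i)) ((T + 1) * ((T + 1) * (T * 5 + 10) + 5) + 1)"
  unfolding a_loop_def
  apply (rule hoare_timed_While[where M="T + 1" and B="(T + 1) * (T * 5 + 10) + 4" and I="a_loop_inv i j"])
  subgoal for k s using cell_inv_regs[of i j s] by (auto simp: a_loop_inv_def)
  subgoal for s using cell_inv_regs[of i j s] by (auto simp: a_loop_inv_def)
  subgoal by (rule a_step_correct) auto
  by simp_all

lemma cell_index_inj: "j \<le> T \<Longrightarrow> b \<le> T \<Longrightarrow> a * row_len + b = i * row_len + j \<Longrightarrow> a = i \<and> b = j"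
proof -
  assume h: "j \<le> T" "b \<le> T" "a * row_len + b = i * row_len + j"
  have row_len: "b < row_len" "j < row_len" "row_len \<noteq> 0" using h by (simp_all add: row_len_def)
  have e1: "(b + a * row_len) div row_len = a" using row_len by simp
  have e2: "(j + i * row_len) div row_len = i" using row_len by simp
  have e3: "(b + a * row_len) mod row_len = b" using row_len by simp
  have e4: "(j + i * row_len) mod row_len = j" using row_len by simp
  have "b + a * row_len = j + i * row_len" using h(3) by simp
  then show ?thesis using e1 e2 e3 e4 by metis
qed

lemma table_base_gt: "T + T < table_base + n" by (simp add: table_base_def)

lemma cell_inv_table_upd: "j \<le> T \<Longrightarrow> cell_inv i j (f, g(table_base + (i * row_len + j) := v)) = cell_inv i j (f, g)"
proof -
  assume jT: "j \<le> T"
  have ne: "a * row_len + b \<noteq> i * row_len + j" if "b \<le> T" "a < i \<or> a = i \<and> b < j" for a b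
  proof
    assume "a * row_len + b = i * row_len + j"
    then have "a = i \<and> b = j" by (rule cell_index_inj[OF jT that(1)])
    then show False using that(2) by simp
  qed
  have fa: "\<forall>a b. b \<le> T \<longrightarrow> (a < i \<or> a = i \<and> b < j) \<longrightarrow>
       (g(table_base + (i * row_len + j) := v)) (table_base + (a * row_len + b)) =
       g (table_base + (a * row_len + b))"
    using ne by auto
  have "table_ok i j (f, g(table_base + (i * row_len + j) := v)) = table_ok i j (f, g)"
    unfolding table_ok_def snd_conv using fa by auto
  moreover have "output_ok i j (f, g(table_base + (i * row_len + j) := v)) = output_ok i j (f, g)"
  proof -
    have "(g(table_base + (i * row_len + j) := v)) 0 = g 0" by (simp only: fun_upd_apply addr_neq if_False)
    then show ?thesis unfolding output_ok_def by simp
  qed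
  moreover have "input_ok (f, g(table_base + (i * row_len + j) := v)) = input_ok (f, g)"
    by (rule input_ok_rupd) (use table_base_gt[of "i * row_len + j"] in simp)
  ultimately show ?thesis by (simp add: cell_inv_def ranks_stored_def)
qed

definition cell_filled :: "nat \<Rightarrow> nat \<Rightarrow> state \<Rightarrow> bool" where
  "cell_filled i j s \<longleftrightarrow> cell_inv i j s \<and> j \<le> T \<and> snd s (table_base + (i * row_len + j)) = dp_cost T x p i j"

lemma min_inv_init: "min_inv i j 0 0 0 m"
  by (simp add: min_inv_def scanned_def candidates_def)

lemma min_inv_final: "(i, j) \<noteq> (0, 0) \<Longrightarrow> min_inv i j (Suc i) 0 fl m \<Longrightarrow> m = dp_cost T x p i j"
proof -
  assume h: "(i, j) \<noteq> (0, 0)" "min_inv i j (Suc i) 0 fl m"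
  have "scanned j (Suc i) 0 \<inter> dp_preds i j = dp_preds i j" by (auto simp: scanned_def dp_preds_def)
  then have v: "candidates i j (scanned j (Suc i) 0) =
      (\<lambda>(a, b). dp_cost T x p a b + block_cost T x p a b i j) ` dp_preds i j"
    by (simp add: candidates_def)
  have "candidates i j (scanned j (Suc i) 0) \<noteq> {}" using v h(1) by (auto simp: dp_preds_def)
  then have "m = Min (candidates i j (scanned j (Suc i) 0))" using h(2) by (auto simp: min_inv_def)
  then show ?thesis using v dp_cost_rec[OF h(1)] by simp
qed

lemma at_origin_iff: "beval at_origin s \<longleftrightarrow> fst s 4 = 0 \<and> fst s 5 = 0" by (auto simp: at_origin_def)

lemma fill_cell_correct: "i \<le> T \<Longrightarrow> j \<le> T \<Longrightarrow>
  hoare_timed (cell_inv i j) fill_cell (cell_filled i j) ((T + 1) * ((T + 1) * (T * 5 + 10) + 5) + 6)"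
proof -
  assume iT: "i \<le> T" and jT: "j \<le> T"
  have origin: "hoare_timed (\<lambda>s. cell_inv i j s \<and> beval at_origin s)
      (RStore (table_addr (NAdd (reg 8) (reg 5))) (RNat (NConst 0))) (cell_filled i j)
      ((T + 1) * ((T + 1) * (T * 5 + 10) + 5) + 5)"
    apply (rule hoare_timed_conseq[OF hoare_timed_RStore])
    subgoal for s
      using cell_inv_input_ok[of i j s] cell_inv_regs[of i j s] jT cell_inv_table_upd[OF jT, of i "fst s" "snd s" 0]
      by (auto simp: cell_filled_def at_origin_iff neval_addr dp_cost_0_0)
    by simp
  have init: "hoare_timed (\<lambda>s. cell_inv i j s \<and> \<not> beval at_origin s)
      (Seq (set_reg 11 0) (Seq (set_reg 6 0) (set_reg 9 0))) (\<lambda>s. a_loop_inv i j 0 s \<and> (i, j) \<noteq> (0, 0)) 3"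
    apply (rule hoare_timed_conseq)
      apply (rule hoare_timed_wp)+
    subgoal for s using cell_inv_regs[of i j s] jT
      by (auto simp: a_loop_inv_def at_origin_iff cell_inv_nupd min_inv_init)
    by simp
  have loop: "hoare_timed (\<lambda>s. a_loop_inv i j 0 s \<and> (i, j) \<noteq> (0, 0)) a_loop
      (\<lambda>s. a_loop_inv i j (Suc i) s \<and> (i, j) \<noteq> (0, 0)) ((T + 1) * ((T + 1) * (T * 5 + 10) + 5) + 1)"
    by (rule hoare_timed_frame[OF a_loop_correct[OF iT jT]])
  have store: "hoare_timed (\<lambda>s. a_loop_inv i j (Suc i) s \<and> (i, j) \<noteq> (0, 0))
      (RStore (table_addr (NAdd (reg 8) (reg 5))) (RLoad min_addr)) (cell_filled i j) 1"
    apply (rule hoare_timed_conseq[OF hoare_timed_RStore])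
    subgoal for s
      using cell_inv_input_ok[of i j s] cell_inv_regs[of i j s] jT min_inv_final[of i j "fst s 11" "snd s min_reg"]
        cell_inv_table_upd[OF jT, of i "fst s" "snd s" "snd s min_reg"]
      by (auto simp: cell_filled_def a_loop_inv_def neval_addr)
    by simp
  have other: "hoare_timed (\<lambda>s. cell_inv i j s \<and> \<not> beval at_origin s)
      (Seq min_over_preds (RStore (table_addr (NAdd (reg 8) (reg 5))) (RLoad min_addr))) (cell_filled i j)
      ((T + 1) * ((T + 1) * (T * 5 + 10) + 5) + 5)"
    unfolding min_over_preds_def
    by (rule hoare_timed_conseq[OF hoare_timed_Seq[OF hoare_timed_Seq[OF init loop] store]]) auto
  show ?thesis unfolding fill_cell_def
    by (rule hoare_timed_conseq[OF hoare_timed_If_cases[OF origin other]]) auto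
qed

lemma n1_eq: "n1 = T - n0"
proof -
  have "{..<T} = {t. t < T \<and> x t = 0} \<union> {t. t < T \<and> x t = 1}" using x_01 by auto
  then have "T = card ({t. t < T \<and> x t = 0} \<union> {t. t < T \<and> x t = 1})" by (metis card_lessThan)
  also have "\<dots> = n0 + n1" by (rule card_Un_disjoint) auto
  finally show ?thesis by simp
qed

lemma n0_le: "n0 \<le> T"
proof -
  have "n0 \<le> card {..<T}" by (rule card_mono) auto
  then show ?thesis by simp
qed

lemma n1_le: "n1 \<le> T" using n1_eq by simp

lemma at_final_cell_iff: "cell_inv i j s \<Longrightarrow> beval at_final_cell s \<longleftrightarrow> i = n0 \<and> j = n1"
  using cell_inv_regs[of i j s] n1_eq unfolding at_final_cell_def by auto

lemma table_ok_extend: "table_ok i j s \<Longrightarrow> snd s (table_base + (i * row_len + j)) = dp_cost T x p i j \<Longrightarrow>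
    table_ok i (Suc j) s"
  unfolding table_ok_def by (metis less_Suc_eq)

lemma table_ok_nupd: "table_ok i j (f(k := v), g) = table_ok i j (f, g)" by (simp add: table_ok_def)
lemma output_ok_nupd: "output_ok i j (f(k := v), g) = output_ok i j (f, g)" by (simp add: output_ok_def)
lemma table_ok_out_upd: "table_ok i j (f, g(0 := v)) = table_ok i j (f, g)"
  unfolding table_ok_def by (simp only: snd_conv fun_upd_apply addr_neq if_False)

lemma table_ok_next_row: "table_ok i (Suc T) s \<Longrightarrow> table_ok (Suc i) 0 s"
  unfolding table_ok_def
proof (intro allI impI)
  fix a b
  assume h: "\<forall>a b. b \<le> T \<longrightarrow> a < i \<or> a = i \<and> b < Suc T \<longrightarrow>
      snd s (table_base + (a * row_len + b)) = dp_cost T x p a b"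
    "b \<le> T" "a < Suc i \<or> a = Suc i \<and> b < 0"
  then have "a < i \<or> a = i \<and> b < Suc T" by auto
  then show "snd s (table_base + (a * row_len + b)) = dp_cost T x p a b" using h(1,2) by blast
qed

lemma cell_inv_next: "cell_inv i j (f, g) \<Longrightarrow> g (table_base + (i * row_len + j)) = dp_cost T x p i j \<Longrightarrow>
   \<not> (i = n0 \<and> j = n1) \<Longrightarrow>
   cell_inv i (Suc j) (f(5 := Suc j), g)"
  unfolding cell_inv_def using table_ok_extend[of i j "(f, g)"]
  by (auto simp: input_ok_nupd ranks_stored_def output_ok_def less_Suc_eq table_ok_nupd)

lemma cell_inv_next_output: "cell_inv i j (f, g) \<Longrightarrow> g (table_base + (i * row_len + j)) = dp_cost T x p i j \<Longrightarrow>
   i = n0 \<Longrightarrow> j = n1 \<Longrightarrow>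
   cell_inv i (Suc j) (f(5 := Suc j), g(0 := dp_cost T x p i j))"
proof -
  assume h: "cell_inv i j (f, g)" "g (table_base + (i * row_len + j)) = dp_cost T x p i j" "i = n0" "j = n1"
  have t: "table_ok i (Suc j) (f, g)" using table_ok_extend[of i j "(f, g)"] h(1,2) by (simp add: cell_inv_def)
  have "table_ok i (Suc j) (f, g(0 := dp_cost T x p i j))" using t by (simp add: table_ok_out_upd)
  moreover have "input_ok (f(5 := Suc j), g(0 := dp_cost T x p i j))"
    using h(1) by (simp add: cell_inv_def input_ok_nupd input_ok_rupd)
  ultimately show ?thesis using h by (auto simp: cell_inv_def ranks_stored_def output_ok_def table_ok_nupd)
qed

lemma emit_and_advance_correct: "hoare_timed (cell_filled i j) emit_and_advance (cell_inv i (Suc j)) 3"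
  unfolding emit_and_advance_def
  apply (rule hoare_timed_conseq)
    apply (rule hoare_timed_wp)+
  subgoal for s
    using cell_inv_input_ok[of i j s] cell_inv_regs[of i j s] at_final_cell_iff[of i j s]
      cell_inv_next[of i j "fst s" "snd s"] cell_inv_next_output[of i j "fst s" "snd s"]
    by (auto simp: cell_filled_def neval_addr)
  by simp

lemma cell_step_correct: "i \<le> T \<Longrightarrow> j \<le> T \<Longrightarrow>
    hoare_timed (cell_inv i j) cell_step (cell_inv i (Suc j)) ((T + 1) * ((T + 1) * (T * 5 + 10) + 5) + 9)"
  unfolding cell_step_def
  by (rule hoare_timed_conseq[OF hoare_timed_Seq[OF fill_cell_correct emit_and_advance_correct]]) auto

lemma j_loop_correct: "i \<le> T \<Longrightarrow> hoare_timed (cell_inv i 0) j_loop (cell_inv i (Suc T))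
   ((T + 1) * ((T + 1) * ((T + 1) * (T * 5 + 10) + 5) + 10) + 1)"
  unfolding j_loop_def
  apply (rule hoare_timed_While[where M="T + 1" and B="(T + 1) * ((T + 1) * (T * 5 + 10) + 5) + 9"
        and I="cell_inv i"])
  subgoal for k s using cell_inv_regs[of i k s] by auto
  subgoal for s using cell_inv_regs[of i "Suc T" s] by auto
  subgoal by (rule cell_step_correct) auto
  by simp_all

lemma cell_inv_next_row:
  "cell_inv i (Suc T) (f, g) \<Longrightarrow> cell_inv (Suc i) 0 (f(4 := Suc i, 8 := Suc i * row_len, 5 := 0), g)"
proof -
  assume h: "cell_inv i (Suc T) (f, g)"
  have "table_ok (Suc i) 0 (f, g)" using h table_ok_next_row unfolding cell_inv_def by blast
  moreover have "output_ok (Suc i) 0 (f, g)"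
  proof -
    have o: "output_ok i (Suc T) (f, g)" using h by (simp add: cell_inv_def)
    show ?thesis unfolding output_ok_def
    proof
      assume "n0 < Suc i \<or> n0 = Suc i \<and> n1 < 0"
      then have "n0 < i \<or> n0 = i \<and> n1 < Suc T" using n1_le by auto
      then show "snd (f, g) 0 = dp_cost T x p n0 n1" using o unfolding output_ok_def by blast
    qed
  qed
  ultimately show ?thesis
    using h by (auto simp: cell_inv_def input_ok_nupd ranks_stored_def table_ok_nupd output_ok_nupd)
qed

lemma i_step_correct: "k < Suc T \<Longrightarrow> hoare_timed (cell_inv k 0) i_step (cell_inv (Suc k) 0)
   ((T + 1) * ((T + 1) * ((T + 1) * (T * 5 + 10) + 5) + 10) + 4)"
proof -
  assume kT: "k < Suc T"
  have s2: "hoare_timed (cell_inv k (Suc T))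
      (Seq (incr 4) (Seq (NStore (NConst 8) (NAdd (NAdd (reg 8) reg_T) (NConst 1))) (set_reg 5 0)))
      (cell_inv (Suc k) 0) 3"
    apply (rule hoare_timed_conseq)
      apply (rule hoare_timed_wp)+
    subgoal for s using cell_inv_regs[of k "Suc T" s] cell_inv_next_row[of k "fst s" "snd s"]
      by (auto simp: row_len_step)
    by simp
  show ?thesis unfolding i_step_def
    by (rule hoare_timed_conseq[OF hoare_timed_Seq[OF j_loop_correct s2]]) (use kT in auto)
qed

lemma i_loop_correct: "hoare_timed (cell_inv 0 0) i_loop (cell_inv (Suc T) 0)
   ((T + 1) * ((T + 1) * ((T + 1) * ((T + 1) * (T * 5 + 10) + 5) + 10) + 5) + 1)"
  unfolding i_loop_def
  apply (rule hoare_timed_While[where M="T + 1"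
        and B="(T + 1) * ((T + 1) * ((T + 1) * (T * 5 + 10) + 5) + 10) + 4" and I="\<lambda>k. cell_inv k 0"])
  subgoal for k s using cell_inv_regs[of k 0 s] by auto
  subgoal for s using cell_inv_regs[of "Suc T" 0 s] by auto
  subgoal by (rule i_step_correct) auto
  by simp_all

lemma fill_table_correct:
  "hoare_timed (\<lambda>s. input_ok s \<and> ranks_stored s \<and> fst s 10 = n0) fill_table (\<lambda>s. snd s 0 = dp_cost T x p n0 n1)
     ((T + 1) * ((T + 1) * ((T + 1) * ((T + 1) * (T * 5 + 10) + 5) + 10) + 5) + 4)"
proof -
  have init: "hoare_timed (\<lambda>s. input_ok s \<and> ranks_stored s \<and> fst s 10 = n0)
      (Seq (set_reg 4 0) (Seq (set_reg 8 0) (set_reg 5 0))) (cell_inv 0 0) 3"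
    apply (rule hoare_timed_conseq)
      apply (rule hoare_timed_wp)+
    subgoal for s by (auto simp: cell_inv_def input_ok_nupd ranks_stored_def table_ok_def output_ok_def)
    by simp
  show ?thesis unfolding fill_table_def
    by (rule hoare_timed_conseq[OF hoare_timed_Seq[OF init hoare_timed_post[OF i_loop_correct]]])
      (auto simp: cell_inv_def output_ok_def n0_le less_Suc_eq_le)
qed

lemma calib_dist_prog_correct: "hoare_timed input_ok calib_dist_prog (\<lambda>s. snd s 0 = dp_cost T x p n0 n1)
  ((T * (T * 4 + 6) + 2) + ((T * 4 + 3) +
     ((T + 1) * ((T + 1) * ((T + 1) * ((T + 1) * (T * 5 + 10) + 5) + 10) + 5) + 4)))"
  unfolding calib_dist_prog_def
  by (rule hoare_timed_Seq[OF compute_ranks_correct hoare_timed_Seq[OF count_zeros_correct fill_table_correct]])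

lemma input_ok_init_state: "input_ok (init_state T x p)"
  unfolding input_ok_def init_state_def by auto

theorem calib_dist_prog_computes_CalDist:
  assumes "0 < T"
  shows "\<exists>n s'. exec calib_dist_prog (init_state T x p) n s' \<and> n \<le> 2000 * T ^ 5 \<and> snd s' 0 = CalDist T x p"
proof -
  obtain n s' where run: "exec calib_dist_prog (init_state T x p) n s'"
    and time: "n \<le> (T * (T * 4 + 6) + 2) + ((T * 4 + 3) +
       ((T + 1) * ((T + 1) * ((T + 1) * ((T + 1) * (T * 5 + 10) + 5) + 10) + 5) + 4))"
    and out: "snd s' 0 = dp_cost T x p n0 n1"
    using calib_dist_prog_correct input_ok_init_state unfolding hoare_timed_def by blast
  have "n \<le> 2000 * T ^ 5" using time time_bound_poly[of T] assms by linarith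
  then show ?thesis using run out by (intro exI[of _ n] exI[of _ s']) (simp add: CalDist_eq_dp_cost)
qed

end

theorem theorem1:
  shows "\<exists>(P::com) (C::real) (c::nat) (k::nat). C > 0 \<and>
    (\<forall>(T::nat) (x::nat \<Rightarrow> real) (p::nat \<Rightarrow> real).
       T > 0 \<and> (\<forall>t<T. x t \<in> {0, 1}) \<and> (\<forall>t<T. 0 \<le> p t \<and> p t \<le> 1) \<longrightarrow>
       (\<exists>n s'. exec P (init_state T x p) n s' \<and> n \<le> c * T ^ k \<and>
              \<bar>snd s' 0 - CalDist T x p\<bar> \<le> C * sqrt (real T)))"
proof -
  have "\<exists>n s'. exec calib_dist_prog (init_state T x p) n s' \<and> n \<le> 2000 * T ^ 5 \<and>
      \<bar>snd s' 0 - CalDist T x p\<bar> \<le> 1 * sqrt (real T)"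
    if T_pos: "T > 0" and x_01: "\<forall>t<T. x t \<in> {0, 1}" and p_01: "\<forall>t<T. 0 \<le> p t \<and> p t \<le> 1"
    for T x p
  proof -
    interpret binary_forecast T x p
      using x_01 p_01 by unfold_locales auto
    obtain n s' where "exec calib_dist_prog (init_state T x p) n s'" "n \<le> 2000 * T ^ 5"
      "snd s' 0 = CalDist T x p"
      using calib_dist_prog_computes_CalDist[OF T_pos] by blast
    then show ?thesis by (intro exI[of _ n] exI[of _ s']) simp
  qed
  then show ?thesis
    by (intro exI[of _ calib_dist_prog] exI[of _ 1] exI[of _ 2000] exI[of _ 5]) auto
qed

end
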